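(* Let $0<\beta<1$, let $\Omega\subset\mathbb{C}$ be a bounded doubly-connected domain, and let $f\colon B_1-\overline{B}_\beta\to\Omega$ be an orientation preserving biholomorphic map. For $t\in(\ln\beta,0)$ define $$A(t)=\frac{1}{2\pi e^t}\int_{\partial B_{e^t}(0)}\frac{1}{|f_z|}\,dl,\qquad B(t)=A''(t)-2A'(t).$$ Then $B(t)\ge0$ for all $t\in(\ln\beta,0)$. Furthermore, if $B(t_0)=0$ for some $t_0\in(\ln\beta,0)$, or if $\lim_{t\to0}B(t)=0$, then $B(t)=0$ for all $t\in(\ln\beta,0)$ and $$f(z)=C_1+C_2z\quad\text{or}\quad f(z)=C_1+\frac{C_2}{z+C_3}$$ for some constants $C_1,C_2,C_3\in\mathbb{C}$.
   Context: $B_r(0)$ is the open disk of radius $r$ centered at $0$, $dl$ is Euclidean arc length, and $f_z=\partial_z f$ is the complex derivative. *)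

theory Defs
  imports "HOL-Complex_Analysis.Complex_Analysis"
begin

definition annulus :: "real \<Rightarrow> complex set" where
  "annulus \<beta> = {z. \<beta> < norm z \<and> norm z < 1}"

text \<open>A(t) = 1/(2 pi e^t) times the arc-length integral of 1/|f'| over the circle |z| = e^t,
  written via the parametrisation z = e^t cis theta, dl = e^t dtheta.\<close>
definition A_fun :: "(complex \<Rightarrow> complex) \<Rightarrow> real \<Rightarrow> real" where
  "A_fun f t = (1 / (2 * pi * exp t)) *
     integral {0..2*pi} (\<lambda>\<theta>. exp t * (1 / norm (deriv f (of_real (exp t) * cis \<theta>))))"

definition B_fun :: "(complex \<Rightarrow> complex) \<Rightarrow> real \<Rightarrow> real" where
  "B_fun f t = deriv (deriv (A_fun f)) t - 2 * deriv (A_fun f) t"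

end

theory Submission
  imports Defs
begin

(*
  Since f is univalent, f' has no zeros, and along a circle the loop z f'(z) has odd winding
  number: difference quotients of f deform it, without vanishing, into the odd loop
  (f(z) - f(-z)) / 2. Hence 1 / f' has a holomorphic square root h on the annulus, and A(t) is
  the mean of |h|^2 over the circle of radius e^t. Parseval's identity for the Laurent series
  h(z) = sum a_n z^n + sum b_n z^(-n-1) gives

    A(t) = sum |a_n|^2 e^(2 n t) + sum |b_n|^2 e^(-2 (n+1) t),

  and every exponential e^(l t) contributes (l^2 - 2 l) times its weight to B = A'' - 2 A'.
  This factor is nonnegative for all exponents that occur and vanishes only for l = 0 and l = 2.
  So B >= 0, and if B vanishes at a point or in the limit t -> 0, then h = a_0 + a_1 z, that is
  f' = (a_0 + a_1 z)^(-2), which integrates to the two stated forms.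
*)

section \<open>Exponential series\<close>

definition exp_series :: "(nat \<Rightarrow> real) \<Rightarrow> (nat \<Rightarrow> real) \<Rightarrow> real \<Rightarrow> real" where
  "exp_series w l s = (\<Sum>n. w n * exp (l n * s))"

lemma abs_mult_exp_le:
  fixes l s d :: real
  assumes "d > 0"
  shows "\<bar>l\<bar> * exp (l * s) \<le> (exp (l * (s + d)) + exp (l * (s - d))) / d"
proof -
  have "\<bar>l\<bar> * d \<le> exp (\<bar>l\<bar> * d)"
    using exp_ge_add_one_self[of "\<bar>l\<bar> * d"] by linarith
  also have "\<dots> \<le> exp (l * d) + exp (- (l * d))"
    by (cases "l \<ge> 0") auto
  finally have "\<bar>l\<bar> * d * exp (l * s) \<le> (exp (l * d) + exp (- (l * d))) * exp (l * s)"
    by (rule mult_right_mono) simp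
  also have "\<dots> = exp (l * (s + d)) + exp (l * (s - d))"
    by (simp add: algebra_simps flip: exp_add)
  finally show ?thesis
    using assms by (simp add: field_simps mult.commute mult.left_commute)
qed

lemma interval_margin:
  fixes s :: real
  assumes "s \<in> {a<..<b}"
  obtains d where "d > 0" "s + d \<in> {a<..<b}" "s - d \<in> {a<..<b}"
proof
  show "min (s - a) (b - s) / 2 > 0" "s + min (s - a) (b - s) / 2 \<in> {a<..<b}"
    "s - min (s - a) (b - s) / 2 \<in> {a<..<b}"
    using assms unfolding greaterThanLessThan_iff min_def by (auto simp: field_simps)
qed

lemma exp_series_summable_mult_exponent:
  fixes w l :: "nat \<Rightarrow> real"
  assumes summ: "\<And>s. s \<in> {a<..<b} \<Longrightarrow> summable (\<lambda>n. \<bar>w n\<bar> * exp (l n * s))"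
    and s: "s \<in> {a<..<b}"
  shows "summable (\<lambda>n. \<bar>w n * l n\<bar> * exp (l n * s))"
proof -
  obtain d where d: "d > 0" "s + d \<in> {a<..<b}" "s - d \<in> {a<..<b}"
    using interval_margin[OF s] .
  have "summable (\<lambda>n. (\<bar>w n\<bar> * exp (l n * (s + d)) + \<bar>w n\<bar> * exp (l n * (s - d))) / d)"
    by (intro summable_divide summable_add summ d)
  then show ?thesis
  proof (rule summable_comparison_test')
    fix n
    have "\<bar>w n\<bar> * (\<bar>l n\<bar> * exp (l n * s)) \<le> \<bar>w n\<bar> * ((exp (l n * (s + d)) + exp (l n * (s - d))) / d)"
      by (intro mult_left_mono abs_mult_exp_le d) auto
    then show "norm (\<bar>w n * l n\<bar> * exp (l n * s))
        \<le> (\<bar>w n\<bar> * exp (l n * (s + d)) + \<bar>w n\<bar> * exp (l n * (s - d))) / d"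
      by (simp add: abs_mult algebra_simps add_divide_distrib)
  qed
qed

lemma exp_series_has_real_derivative:
  fixes w l :: "nat \<Rightarrow> real"
  assumes summ: "\<And>s. s \<in> {a<..<b} \<Longrightarrow> summable (\<lambda>n. \<bar>w n\<bar> * exp (l n * s))"
    and t: "t \<in> {a<..<b}"
  shows "(exp_series w l has_real_derivative exp_series (\<lambda>n. w n * l n) l t) (at t)"
proof -
  obtain d where d: "d > 0" "t + d \<in> {a<..<b}" "t - d \<in> {a<..<b}"
    using interval_margin[OF t] .
  have majorant: "summable (\<lambda>n. \<bar>w n * l n\<bar> * exp (l n * (t + d)) + \<bar>w n * l n\<bar> * exp (l n * (t - d)))"
    using d by (intro summable_add exp_series_summable_mult_exponent[OF summ]) auto
  have "uniformly_convergent_on {t-d..t+d} (\<lambda>n x. \<Sum>i<n. w i * l i * exp (l i * x))"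
  proof (rule Weierstrass_m_test'[OF _ majorant])
    fix n x assume x: "x \<in> {t-d..t+d}"
    have "l n * x \<le> l n * (t + d) \<or> l n * x \<le> l n * (t - d)"
      using x by (cases "l n \<ge> 0") (auto intro: mult_left_mono mult_left_mono_neg)
    then have "exp (l n * x) \<le> exp (l n * (t + d)) + exp (l n * (t - d))"
      by (smt (verit) exp_gt_zero exp_le_cancel_iff)
    then have "\<bar>w n * l n\<bar> * exp (l n * x) \<le> \<bar>w n * l n\<bar> * (exp (l n * (t + d)) + exp (l n * (t - d)))"
      by (intro mult_left_mono) auto
    then show "norm (w n * l n * exp (l n * x))
        \<le> \<bar>w n * l n\<bar> * exp (l n * (t + d)) + \<bar>w n * l n\<bar> * exp (l n * (t - d))"
      by (simp add: abs_mult algebra_simps)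
  qed
  moreover have "summable (\<lambda>n. w n * exp (l n * t))"
    by (rule summable_comparison_test'[OF summ[OF t]]) (simp add: abs_mult)
  moreover have "t \<in> interior {t-d..t+d}"
    using d by auto
  ultimately show ?thesis
    unfolding exp_series_def[abs_def]
    by (intro has_field_derivative_series'(2)[where S="{t-d..t+d}"])
       (use d in \<open>auto intro!: derivative_eq_intros\<close>)
qed

lemma exp_series_pair_deriv:
  fixes F :: "real \<Rightarrow> real"
  assumes S1: "\<And>s. s \<in> {a<..<b} \<Longrightarrow> summable (\<lambda>n. \<bar>w1 n\<bar> * exp (l1 n * s))"
    and S2: "\<And>s. s \<in> {a<..<b} \<Longrightarrow> summable (\<lambda>n. \<bar>w2 n\<bar> * exp (l2 n * s))"
    and F: "\<And>s. s \<in> {a<..<b} \<Longrightarrow> F s = exp_series w1 l1 s + exp_series w2 l2 s"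
    and t: "t \<in> {a<..<b}"
  shows "deriv F t = exp_series (\<lambda>n. w1 n * l1 n) l1 t + exp_series (\<lambda>n. w2 n * l2 n) l2 t"
proof (rule DERIV_imp_deriv)
  show "(F has_real_derivative
      exp_series (\<lambda>n. w1 n * l1 n) l1 t + exp_series (\<lambda>n. w2 n * l2 n) l2 t) (at t)"
    by (rule has_field_derivative_transform_within_open[OF DERIV_add open_greaterThanLessThan t])
       (use exp_series_has_real_derivative[OF S1 t] exp_series_has_real_derivative[OF S2 t] F in auto)
qed

lemma exp_series_diff:
  assumes w: "summable (\<lambda>n. w n * exp (l n * t))" and v: "summable (\<lambda>n. v n * exp (l n * t))"
  shows "exp_series w l t - c * exp_series v l t = exp_series (\<lambda>n. w n - c * v n) l t"
proof -
  have "exp_series w l t - c * exp_series v l t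
      = (\<Sum>n. w n * exp (l n * t)) - (\<Sum>n. c * (v n * exp (l n * t)))"
    unfolding exp_series_def by (simp add: suminf_mult[OF v])
  also have "\<dots> = (\<Sum>n. w n * exp (l n * t) - c * (v n * exp (l n * t)))"
    by (rule suminf_diff[OF w summable_mult[OF v]])
  finally show ?thesis
    by (simp add: exp_series_def algebra_simps)
qed

lemma summable_exp_series_abs_cancel:
  fixes w l :: "nat \<Rightarrow> real"
  assumes "summable (\<lambda>n. \<bar>w n\<bar> * exp (l n * s))"
  shows "summable (\<lambda>n. w n * exp (l n * s))"
  by (rule summable_comparison_test'[OF assms]) (simp add: abs_mult)

lemma exp_series_pair_deriv2_minus_2deriv:
  fixes F :: "real \<Rightarrow> real"
  assumes S1: "\<And>s. s \<in> {a<..<b} \<Longrightarrow> summable (\<lambda>n. \<bar>w1 n\<bar> * exp (l1 n * s))"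
    and S2: "\<And>s. s \<in> {a<..<b} \<Longrightarrow> summable (\<lambda>n. \<bar>w2 n\<bar> * exp (l2 n * s))"
    and F: "\<And>s. s \<in> {a<..<b} \<Longrightarrow> F s = exp_series w1 l1 s + exp_series w2 l2 s"
    and t: "t \<in> {a<..<b}"
  shows "deriv (deriv F) t - 2 * deriv F t
    = exp_series (\<lambda>n. w1 n * (l1 n * l1 n - 2 * l1 n)) l1 t
      + exp_series (\<lambda>n. w2 n * (l2 n * l2 n - 2 * l2 n)) l2 t"
proof -
  have S1': "\<And>s. s \<in> {a<..<b} \<Longrightarrow> summable (\<lambda>n. \<bar>w1 n * l1 n\<bar> * exp (l1 n * s))"
    by (rule exp_series_summable_mult_exponent[OF S1])
  have S2': "\<And>s. s \<in> {a<..<b} \<Longrightarrow> summable (\<lambda>n. \<bar>w2 n * l2 n\<bar> * exp (l2 n * s))"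
    by (rule exp_series_summable_mult_exponent[OF S2])
  note S1'' = exp_series_summable_mult_exponent[OF S1' t]
  note S2'' = exp_series_summable_mult_exponent[OF S2' t]
  have d1: "deriv F t = exp_series (\<lambda>n. w1 n * l1 n) l1 t + exp_series (\<lambda>n. w2 n * l2 n) l2 t"
    by (rule exp_series_pair_deriv[OF S1 S2 F t])
  have d2: "deriv (deriv F) t
      = exp_series (\<lambda>n. w1 n * l1 n * l1 n) l1 t + exp_series (\<lambda>n. w2 n * l2 n * l2 n) l2 t"
    by (rule exp_series_pair_deriv[OF S1' S2' exp_series_pair_deriv[OF S1 S2 F] t])
  have "deriv (deriv F) t - 2 * deriv F t
    = (exp_series (\<lambda>n. w1 n * l1 n * l1 n) l1 t - 2 * exp_series (\<lambda>n. w1 n * l1 n) l1 t)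
      + (exp_series (\<lambda>n. w2 n * l2 n * l2 n) l2 t - 2 * exp_series (\<lambda>n. w2 n * l2 n) l2 t)"
    unfolding d1 d2 by (simp add: distrib_left)
  also have "\<dots> = exp_series (\<lambda>n. w1 n * l1 n * l1 n - 2 * (w1 n * l1 n)) l1 t
      + exp_series (\<lambda>n. w2 n * l2 n * l2 n - 2 * (w2 n * l2 n)) l2 t"
    using S1'' S2'' S1'[OF t] S2'[OF t]
    by (simp only: exp_series_diff summable_exp_series_abs_cancel)
  also have "\<dots> = exp_series (\<lambda>n. w1 n * (l1 n * l1 n - 2 * l1 n)) l1 t
      + exp_series (\<lambda>n. w2 n * (l2 n * l2 n - 2 * l2 n)) l2 t"
    by (simp add: algebra_simps)
  finally show ?thesis .
qed

lemma exp_series_summable_ode_weights: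
  fixes w l :: "nat \<Rightarrow> real"
  assumes summ: "\<And>s. s \<in> {a<..<b} \<Longrightarrow> summable (\<lambda>n. \<bar>w n\<bar> * exp (l n * s))"
    and t: "t \<in> {a<..<b}"
  shows "summable (\<lambda>n. w n * (l n * l n - 2 * l n) * exp (l n * t))"
proof -
  have S1: "\<And>s. s \<in> {a<..<b} \<Longrightarrow> summable (\<lambda>n. \<bar>w n * l n\<bar> * exp (l n * s))"
    by (rule exp_series_summable_mult_exponent[OF summ])
  have "summable (\<lambda>n. w n * l n * l n * exp (l n * t) - 2 * (w n * l n * exp (l n * t)))"
    using summable_exp_series_abs_cancel[OF exp_series_summable_mult_exponent[OF S1 t]]
      summable_mult[OF summable_exp_series_abs_cancel[OF S1[OF t]], of 2]
    by (rule summable_diff)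
  then show ?thesis
    by (simp add: algebra_simps)
qed

lemma ode_factor_nonneg: "(l::real) \<le> 0 \<or> 2 \<le> l \<Longrightarrow> 0 \<le> l * l - 2 * l"
  using zero_le_mult_iff[of l "l - 2"] by (auto simp: algebra_simps)

lemma ode_factor_pos: "(l::real) < 0 \<or> 2 < l \<Longrightarrow> 0 < l * l - 2 * l"
  using zero_less_mult_iff[of l "l - 2"] by (auto simp: algebra_simps)

lemma exp_series_term_le:
  assumes "summable (\<lambda>n. w n * exp (l n * t))" "\<And>n. w n \<ge> 0"
  shows "w n * exp (l n * t) \<le> exp_series w l t"
  using sum_le_suminf[OF assms(1), of "{n}"] assms(2) by (simp add: exp_series_def)

lemma exp_series_nonneg:
  assumes "summable (\<lambda>n. w n * exp (l n * t))" "\<And>n. w n \<ge> 0"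
  shows "exp_series w l t \<ge> 0"
  unfolding exp_series_def using assms by (intro suminf_nonneg) auto

lemma exp_series_pair_weights_vanish:
  fixes F :: "real \<Rightarrow> real"
  assumes "a < 0"
    and S1: "\<And>s. s \<in> {a<..<0} \<Longrightarrow> summable (\<lambda>n. w1 n * exp (l1 n * s))"
    and S2: "\<And>s. s \<in> {a<..<0} \<Longrightarrow> summable (\<lambda>n. w2 n * exp (l2 n * s))"
    and w1: "\<And>n. w1 n \<ge> 0" and w2: "\<And>n. w2 n \<ge> 0"
    and F: "\<And>s. s \<in> {a<..<0} \<Longrightarrow> F s = exp_series w1 l1 s + exp_series w2 l2 s"
    and vanish: "(\<exists>t0\<in>{a<..<0}. F t0 = 0) \<or> (F \<longlongrightarrow> 0) (at_left 0)"
  shows "w1 n = 0 \<and> w2 n = 0"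
proof -
  have below: "w1 n * exp (l1 n * s) \<le> F s \<and> w2 n * exp (l2 n * s) \<le> F s"
    if s: "s \<in> {a<..<0}" for s
    using exp_series_term_le[OF S1[OF s] w1, of n] exp_series_term_le[OF S2[OF s] w2, of n]
      exp_series_nonneg[OF S1[OF s] w1] exp_series_nonneg[OF S2[OF s] w2] F[OF s]
    by linarith
  have "\<exists>s. w1 n * exp (l1 n * s) \<le> 0 \<and> w2 n * exp (l2 n * s) \<le> 0"
    using vanish
  proof
    assume "\<exists>t0\<in>{a<..<0}. F t0 = 0"
    then show ?thesis using below by fastforce
  next
    assume lim: "(F \<longlongrightarrow> 0) (at_left 0)"
    have ev: "eventually (\<lambda>s. s \<in> {a<..<0}) (at_left (0::real))"
      using \<open>a < 0\<close> by (intro eventually_at_left_real) simp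
    have "w1 n * exp (l1 n * 0) \<le> 0"
    proof (rule tendsto_le[OF trivial_limit_at_left_real lim])
      show "eventually (\<lambda>s. w1 n * exp (l1 n * s) \<le> F s) (at_left 0)"
        using ev by (rule eventually_mono) (use below in blast)
    qed (intro tendsto_intros)
    moreover have "w2 n * exp (l2 n * 0) \<le> 0"
    proof (rule tendsto_le[OF trivial_limit_at_left_real lim])
      show "eventually (\<lambda>s. w2 n * exp (l2 n * s) \<le> F s) (at_left 0)"
        using ev by (rule eventually_mono) (use below in blast)
    qed (intro tendsto_intros)
    ultimately show ?thesis by blast
  qed
  then show ?thesis
    using w1[of n] w2[of n] by (auto simp: mult_le_0_iff)
qed

section \<open>Laurent series on the annulus\<close>

lemma sums_integral_Weierstrass:
  fixes u :: "nat \<Rightarrow> real \<Rightarrow> 'a::banach"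
  assumes cont: "\<And>n. continuous_on {a..b} (u n)"
    and bound: "\<And>n x. x \<in> {a..b} \<Longrightarrow> norm (u n x) \<le> M n" and M: "summable M"
  shows "(\<lambda>n. integral {a..b} (u n)) sums integral {a..b} (\<lambda>x. \<Sum>n. u n x)"
    and "(\<lambda>x. \<Sum>n. u n x) integrable_on {a..b}"
proof -
  have "uniform_limit {a..b} (\<lambda>n x. \<Sum>i<n. u i x) (\<lambda>x. \<Sum>i. u i x) sequentially"
    by (rule Weierstrass_m_test[OF bound M])
  moreover have "\<And>n. continuous_on {a..b} (\<lambda>x. \<Sum>i<n. u i x)"
    by (intro continuous_on_sum cont)
  ultimately obtain I J where I: "\<And>n. ((\<lambda>x. \<Sum>i<n. u i x) has_integral I n) {a..b}"
    and J: "((\<lambda>x. \<Sum>i. u i x) has_integral J) {a..b}" and IJ: "I \<longlonglongrightarrow> J"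
    by (rule uniform_limit_integral) auto
  have "((\<lambda>x. \<Sum>i<n. u i x) has_integral (\<Sum>i<n. integral {a..b} (u i))) {a..b}" for n
    by (intro has_integral_sum finite_lessThan integrable_integral integrable_continuous_interval cont)
  then have "I = (\<lambda>n. \<Sum>i<n. integral {a..b} (u i))"
    using I has_integral_unique by blast
  then show "(\<lambda>n. integral {a..b} (u n)) sums integral {a..b} (\<lambda>x. \<Sum>n. u n x)"
    using IJ J unfolding sums_def by (simp add: integral_unique)
  show "(\<lambda>x. \<Sum>n. u n x) integrable_on {a..b}"
    using J by blast
qed

lemma sums_contour_integral_circlepath:
  fixes u :: "nat \<Rightarrow> complex \<Rightarrow> complex"
  assumes r: "r > 0" and cont: "\<And>n. continuous_on (sphere z r) (u n)"
    and bound: "\<And>n w. w \<in> sphere z r \<Longrightarrow> norm (u n w) \<le> M n" and M: "summable M"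
    and sums: "\<And>w. w \<in> sphere z r \<Longrightarrow> (\<lambda>n. u n w) sums U w"
  shows "(\<lambda>n. contour_integral (circlepath z r) (u n)) sums contour_integral (circlepath z r) U"
proof -
  have "uniform_limit (sphere z r) (\<lambda>n x. \<Sum>i<n. u i x) (\<lambda>x. \<Sum>i. u i x) sequentially"
    by (rule Weierstrass_m_test[OF bound M])
  then have lim: "uniform_limit (sphere z r) (\<lambda>n x. \<Sum>i<n. u i x) U sequentially"
    by (rule uniform_limit_cong'[THEN iffD1, rotated -1]) (use sums in \<open>auto simp: sums_iff\<close>)
  have int: "\<And>i. u i contour_integrable_on circlepath z r"
    using cont r by (intro contour_integrable_continuous_circlepath) simp
  have "(\<lambda>n. contour_integral (circlepath z r) (\<lambda>x. \<Sum>i<n. u i x))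
      \<longlonglongrightarrow> contour_integral (circlepath z r) U"
    by (rule contour_integral_uniform_limit_circlepath(2)[OF _ lim _ r])
       (auto intro!: always_eventually contour_integrable_sum int)
  moreover have "contour_integral (circlepath z r) (\<lambda>x. \<Sum>i<n. u i x)
      = (\<Sum>i<n. contour_integral (circlepath z r) (u i))" for n
    by (rule contour_integral_sum) (auto intro: int)
  ultimately show ?thesis
    unfolding sums_def by simp
qed

lemma contour_integral_circlepath_0_eq_integral:
  assumes "r > 0"
  shows "contour_integral (circlepath 0 r) g
    = integral {0..2*pi} (\<lambda>\<theta>. g (r * cis \<theta>) * (\<i> * r * cis \<theta>))"
proof -
  define F where "F \<theta> = g (r * cis \<theta>) * (\<i> * r * cis \<theta>)" for \<theta>
  have "contour_integral (circlepath 0 r) g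
      = integral {0..1} (\<lambda>x. g (circlepath 0 r x) * vector_derivative (circlepath 0 r) (at x))"
    by (rule contour_integral_integral)
  also have "\<dots> = integral {0..1} (\<lambda>x. of_real (2*pi) * F (2*pi*x))"
    by (intro integral_cong)
       (simp only: vector_derivative_circlepath, simp add: circlepath F_def cis_conv_exp mult_ac)
  also have "\<dots> = of_real (2*pi) * integral ((\<lambda>x. x / (2*pi)) ` {0..2*pi}) (\<lambda>x. F (2*pi*x))"
  proof -
    have "bij_betw (\<lambda>x. x / (2*pi)) {0..2*pi} {0..1}"
      by (rule bij_betwI[of _ _ _ "\<lambda>x. x * (2*pi)"]) (auto simp: field_simps)
    then show ?thesis by (simp add: bij_betw_def)
  qed
  also have "integral ((\<lambda>x. x / (2*pi)) ` {0..2*pi}) (\<lambda>x. F (2*pi*x))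
      = (1 / \<bar>2*pi\<bar>) *\<^sub>R integral {0..2*pi} F"
    by (rule integral_stretch_real) simp
  finally show ?thesis
    by (simp add: F_def[abs_def] scaleR_conv_of_real)
qed

lemma continuous_logs_differ_by_constant:
  fixes p q :: "'a::topological_space \<Rightarrow> complex"
  assumes S: "connected S" and p: "continuous_on S p" and q: "continuous_on S q"
    and same_exp: "\<And>x. x \<in> S \<Longrightarrow> exp (p x) = exp (q x)" and x0: "x0 \<in> S"
  obtains n :: int where "\<And>x. x \<in> S \<Longrightarrow> p x = q x + 2 * pi * \<i> * of_int n"
proof -
  define g where "g x = (p x - q x) / (2 * pi * \<i>)" for x
  have g_int: "\<exists>n::int. g x = of_int n" if x: "x \<in> S" for x
  proof -
    obtain n :: int where "p x = q x + (of_int (2 * n) * pi) * \<i>"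
      using same_exp[OF x] exp_eq by blast
    then show ?thesis by (auto simp: g_def field_simps)
  qed
  have "continuous_on S g"
    unfolding g_def by (intro continuous_intros p q) auto
  then have "g constant_on S"
  proof (rule continuous_discrete_range_constant[OF S])
    fix x assume x: "x \<in> S"
    show "\<exists>e>0. \<forall>y. y \<in> S \<and> g y \<noteq> g x \<longrightarrow> e \<le> norm (g y - g x)"
    proof (intro exI[of _ 1] conjI allI impI)
      fix y assume y: "y \<in> S \<and> g y \<noteq> g x"
      obtain m n :: int where m: "g x = of_int m" and n: "g y = of_int n"
        using g_int x y by blast
      then have "m \<noteq> n" using y by auto
      then have "1 \<le> \<bar>of_int n - of_int m :: real\<bar>" by linarith
      also have "\<dots> = norm (g y - g x)"
        unfolding m n by (metis norm_of_int of_int_diff)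
      finally show "1 \<le> norm (g y - g x)" .
    qed simp
  qed
  then obtain c where c: "\<And>x. x \<in> S \<Longrightarrow> g x = c"
    unfolding constant_on_def by blast
  obtain n :: int where n: "g x0 = of_int n"
    using g_int x0 by blast
  show ?thesis
  proof (rule that[of n])
    fix x assume "x \<in> S"
    then have "g x = of_int n" using c x0 n by metis
    then show "p x = q x + 2 * pi * \<i> * of_int n" by (simp add: g_def field_simps)
  qed
qed

lemma annulus_eq_ball_minus_cball: "annulus \<beta> = ball 0 1 - cball 0 \<beta>"
  by (auto simp: annulus_def)

lemma open_annulus: "open (annulus \<beta>)"
  by (simp add: annulus_eq_ball_minus_cball open_Diff)

lemma connected_annulus_unit: "connected (annulus \<beta>)"
proof -
  have "connected {x::complex. \<beta> < norm (x - 0) \<and> norm (x - 0) < 1}"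
    by (rule connected_annulus(1)) simp
  then show ?thesis
    by (simp add: annulus_def)
qed

lemma zero_notin_annulus: "0 \<le> \<beta> \<Longrightarrow> 0 \<notin> annulus \<beta>"
  by (auto simp: annulus_def)

lemma uminus_in_annulus: "z \<in> annulus \<beta> \<Longrightarrow> - z \<in> annulus \<beta>"
  by (simp add: annulus_def)

lemma sphere_subset_annulus: "\<beta> < r \<Longrightarrow> r < 1 \<Longrightarrow> sphere 0 r \<subseteq> annulus \<beta>"
  by (auto simp: annulus_def)

lemma polar_in_annulus:
  "0 \<le> \<beta> \<Longrightarrow> \<beta> < r \<Longrightarrow> r < 1 \<Longrightarrow> of_real r * cis \<theta> \<in> annulus \<beta>"
  by (simp add: annulus_def norm_mult)

lemma exp_in_annulus_iff:
  assumes "\<beta> > 0"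
  shows "exp w \<in> annulus \<beta> \<longleftrightarrow> ln \<beta> < Re w \<and> Re w < 0"
  using assms exp_less_cancel_iff[of "ln \<beta>" "Re w"] by (simp add: annulus_def norm_exp_eq_Re)

lemma continuous_on_sphere_annulus:
  "h holomorphic_on annulus \<beta> \<Longrightarrow> \<beta> < r \<Longrightarrow> r < 1 \<Longrightarrow> continuous_on (sphere 0 r) h"
  by (meson continuous_on_subset holomorphic_on_imp_continuous_on sphere_subset_annulus)

lemma bounded_on_sphere_annulus:
  assumes "h holomorphic_on annulus \<beta>" "\<beta> < r" "r < 1"
  obtains M where "M \<ge> 0" "\<And>w. norm w = r \<Longrightarrow> norm (h w) \<le> M"
proof -
  have "compact (h ` sphere 0 r)"
    using continuous_on_sphere_annulus[OF assms] by (intro compact_continuous_image) auto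
  then obtain M where "M > 0" "\<And>y. y \<in> h ` sphere 0 r \<Longrightarrow> norm y \<le> M"
    using compact_imp_bounded bounded_pos by metis
  then show ?thesis
    using that[of M] by auto
qed

lemma homotopic_loops_circlepath_annulus:
  assumes "0 \<le> \<beta>" "\<beta> < r1" "r1 < 1" "\<beta> < r2" "r2 < 1"
  shows "homotopic_loops (annulus \<beta>) (circlepath 0 r1) (circlepath 0 r2)"
proof (rule homotopic_loops_linear)
  fix t :: real
  show "closed_segment (circlepath 0 r1 t) (circlepath 0 r2 t) \<subseteq> annulus \<beta>"
  proof
    fix x assume "x \<in> closed_segment (circlepath 0 r1 t) (circlepath 0 r2 t)"
    then obtain u where u: "0 \<le> u" "u \<le> 1"
      and x: "x = (1 - u) *\<^sub>R circlepath 0 r1 t + u *\<^sub>R circlepath 0 r2 t"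
      unfolding closed_segment_def by auto
    define \<rho> where "\<rho> = (1 - u) * r1 + u * r2"
    have "\<rho> \<ge> 0"
      using assms u unfolding \<rho>_def by (intro add_nonneg_nonneg mult_nonneg_nonneg) auto
    have "x = of_real \<rho> * exp (2 * of_real pi * \<i> * of_real t)"
      by (simp add: x circlepath scaleR_conv_of_real \<rho>_def algebra_simps)
    then have "norm x = \<rho>"
      using \<open>\<rho> \<ge> 0\<close> by (simp add: norm_mult norm_exp_eq_Re)
    moreover have "(1 - u) * min r1 r2 \<le> (1 - u) * r1" "u * min r1 r2 \<le> u * r2"
      "(1 - u) * r1 \<le> (1 - u) * max r1 r2" "u * r2 \<le> u * max r1 r2"
      using u by (auto intro!: mult_left_mono)
    then have "min r1 r2 \<le> \<rho>" "\<rho> \<le> max r1 r2"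
      unfolding \<rho>_def by (simp_all add: left_diff_distrib)
    ultimately show "x \<in> annulus \<beta>"
      using assms by (auto simp: annulus_def)
  qed
qed auto

lemma contour_integral_circlepath_annulus_eq:
  assumes "g holomorphic_on annulus \<beta>" "0 \<le> \<beta>" "\<beta> < r1" "r1 < 1" "\<beta> < r2" "r2 < 1"
  shows "contour_integral (circlepath 0 r1) g = contour_integral (circlepath 0 r2) g"
  using assms
  by (intro Cauchy_theorem_homotopic_loops[OF homotopic_loops_circlepath_annulus open_annulus])
     auto

lemma norm_contour_integral_circlepath_le:
  assumes "r > 0" "continuous_on (sphere z r) g" "\<And>w. norm (w - z) = r \<Longrightarrow> norm (g w) \<le> B"
  shows "norm (contour_integral (circlepath z r) g) \<le> B * (2 * pi * r)"
proof -
  have "(g has_contour_integral contour_integral (circlepath z r) g) (circlepath z r)"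
    using assms by (intro has_contour_integral_integral contour_integrable_continuous_circlepath) auto
  moreover have "0 \<le> B"
  proof -
    have "norm (g (z + of_real r)) \<le> B"
      using assms(1) by (intro assms(3)) simp
    then show ?thesis
      using norm_ge_zero order_trans by blast
  qed
  ultimately show ?thesis
    using assms
    by (intro has_contour_integral_bound_circlepath) (auto simp: dist_norm norm_minus_commute)
qed

text \<open>\<open>principal_coeff h \<beta> n\<close> is the Laurent coefficient of \<open>z ^ (- n - 1)\<close>.\<close>

definition laurent_coeff :: "(complex \<Rightarrow> complex) \<Rightarrow> real \<Rightarrow> nat \<Rightarrow> complex" where
  "laurent_coeff h \<beta> n =
     contour_integral (circlepath 0 ((\<beta> + 1) / 2)) (\<lambda>w. h w / w ^ Suc n) / (2 * pi * \<i>)"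

definition principal_coeff :: "(complex \<Rightarrow> complex) \<Rightarrow> real \<Rightarrow> nat \<Rightarrow> complex" where
  "principal_coeff h \<beta> n =
     contour_integral (circlepath 0 ((\<beta> + 1) / 2)) (\<lambda>w. h w * w ^ n) / (2 * pi * \<i>)"

lemma laurent_coeff_circlepath:
  assumes "h holomorphic_on annulus \<beta>" "0 \<le> \<beta>" "\<beta> < r" "r < 1"
  shows "laurent_coeff h \<beta> n = contour_integral (circlepath 0 r) (\<lambda>w. h w / w ^ Suc n) / (2 * pi * \<i>)"
proof -
  have "(\<lambda>w. h w / w ^ Suc n) holomorphic_on annulus \<beta>"
    using assms zero_notin_annulus[of \<beta>] by (intro holomorphic_intros) auto
  then show ?thesis
    unfolding laurent_coeff_def
    using assms contour_integral_circlepath_annulus_eq[of _ \<beta> "(\<beta> + 1) / 2" r] by simp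
qed

lemma principal_coeff_circlepath:
  assumes "h holomorphic_on annulus \<beta>" "0 \<le> \<beta>" "\<beta> < r" "r < 1"
  shows "principal_coeff h \<beta> n = contour_integral (circlepath 0 r) (\<lambda>w. h w * w ^ n) / (2 * pi * \<i>)"
proof -
  have "(\<lambda>w. h w * w ^ n) holomorphic_on annulus \<beta>"
    using assms by (intro holomorphic_intros)
  then show ?thesis
    unfolding principal_coeff_def
    using assms contour_integral_circlepath_annulus_eq[of _ \<beta> "(\<beta> + 1) / 2" r] by simp
qed

lemma norm_laurent_coeff_le:
  assumes holo: "h holomorphic_on annulus \<beta>" and "0 \<le> \<beta>" "\<beta> < r" "r < 1"
    and M: "\<And>w. norm w = r \<Longrightarrow> norm (h w) \<le> M"
  shows "norm (laurent_coeff h \<beta> n) \<le> M / r ^ n"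
proof -
  have r: "r > 0"
    using assms by simp
  have "norm (contour_integral (circlepath 0 r) (\<lambda>w. h w / w ^ Suc n)) \<le> M / r ^ Suc n * (2 * pi * r)"
  proof (rule norm_contour_integral_circlepath_le[OF r])
    show "continuous_on (sphere 0 r) (\<lambda>w. h w / w ^ Suc n)"
      using continuous_on_sphere_annulus[OF holo] assms by (intro continuous_intros) auto
    show "norm (h w / w ^ Suc n) \<le> M / r ^ Suc n" if "norm (w - 0) = r" for w
      using M[of w] that r by (simp add: norm_divide norm_mult norm_power divide_right_mono)
  qed
  then show ?thesis
    using r by (simp add: laurent_coeff_circlepath[OF assms(1-4)] norm_divide norm_mult field_simps)
qed

lemma norm_principal_coeff_le:
  assumes holo: "h holomorphic_on annulus \<beta>" and "0 \<le> \<beta>" "\<beta> < r" "r < 1"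
    and M: "\<And>w. norm w = r \<Longrightarrow> norm (h w) \<le> M"
  shows "norm (principal_coeff h \<beta> n) \<le> M * r ^ Suc n"
proof -
  have r: "r > 0"
    using assms by simp
  have "norm (contour_integral (circlepath 0 r) (\<lambda>w. h w * w ^ n)) \<le> M * r ^ n * (2 * pi * r)"
  proof (rule norm_contour_integral_circlepath_le[OF r])
    show "continuous_on (sphere 0 r) (\<lambda>w. h w * w ^ n)"
      using continuous_on_sphere_annulus[OF holo] assms by (intro continuous_intros) auto
    show "norm (h w * w ^ n) \<le> M * r ^ n" if "norm (w - 0) = r" for w
      using M[of w] that r by (simp add: norm_mult norm_power mult_right_mono)
  qed
  then show ?thesis
    using r by (simp add: principal_coeff_circlepath[OF assms(1-4)] norm_divide norm_mult field_simps)
qed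

lemma summable_laurent_coeff:
  assumes holo: "h holomorphic_on annulus \<beta>" and "0 \<le> \<beta>" "\<beta> < \<rho>" "\<rho> < 1"
  shows "summable (\<lambda>n. norm (laurent_coeff h \<beta> n) * \<rho> ^ n)"
proof -
  define r where "r = (\<rho> + 1) / 2"
  have r: "\<beta> < r" "r < 1" "\<rho> < r"
    using assms by (auto simp: r_def)
  obtain M where M: "M \<ge> 0" "\<And>w. norm w = r \<Longrightarrow> norm (h w) \<le> M"
    using bounded_on_sphere_annulus[OF holo r(1,2)] by blast
  have "summable (\<lambda>n. M * (\<rho> / r) ^ n)"
    using r assms by (intro summable_mult summable_geometric) auto
  then show ?thesis
  proof (rule summable_comparison_test')
    fix n
    have "norm (laurent_coeff h \<beta> n) * \<rho> ^ n \<le> M / r ^ n * \<rho> ^ n"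
      using norm_laurent_coeff_le[OF holo assms(2) r(1,2) M(2)] assms by (intro mult_right_mono) auto
    then show "norm (norm (laurent_coeff h \<beta> n) * \<rho> ^ n) \<le> M * (\<rho> / r) ^ n"
      using assms by (simp add: power_divide field_simps)
  qed
qed

lemma summable_principal_coeff:
  assumes holo: "h holomorphic_on annulus \<beta>" and "0 \<le> \<beta>" "\<beta> < \<rho>" "\<rho> < 1"
  shows "summable (\<lambda>n. norm (principal_coeff h \<beta> n) / \<rho> ^ Suc n)"
proof -
  define r where "r = (\<beta> + \<rho>) / 2"
  have r: "\<beta> < r" "r < 1" "r < \<rho>"
    using assms by (auto simp: r_def)
  obtain M where M: "M \<ge> 0" "\<And>w. norm w = r \<Longrightarrow> norm (h w) \<le> M"
    using bounded_on_sphere_annulus[OF holo r(1,2)] by blast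
  have "summable (\<lambda>n. (M * (r / \<rho>)) * (r / \<rho>) ^ n)"
    using r assms by (intro summable_mult summable_geometric) auto
  then show ?thesis
  proof (rule summable_comparison_test')
    fix n
    have "norm (principal_coeff h \<beta> n) / \<rho> ^ Suc n \<le> M * r ^ Suc n / \<rho> ^ Suc n"
      using norm_principal_coeff_le[OF holo assms(2) r(1,2) M(2)] assms by (intro divide_right_mono) auto
    then show "norm (norm (principal_coeff h \<beta> n) / \<rho> ^ Suc n) \<le> (M * (r / \<rho>)) * (r / \<rho>) ^ n"
      using assms r by (simp add: power_divide field_simps)
  qed
qed

lemma Cauchy_kernel_sums_outer:
  fixes w z :: complex
  assumes "norm z < norm w"
  shows "(\<lambda>n. z ^ n / w ^ Suc n) sums (1 / (w - z))"
proof -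
  have w: "w \<noteq> 0" "w - z \<noteq> 0"
    using assms by auto
  have "(\<lambda>n. (z / w) ^ n) sums (1 / (1 - z / w))"
    using assms w by (intro geometric_sums) (simp add: norm_divide)
  from sums_mult[OF this, of "1 / w"] show ?thesis
    using w by (simp add: power_divide field_simps)
qed

lemma Cauchy_kernel_sums_inner:
  fixes w z :: complex
  assumes "norm w < norm z"
  shows "(\<lambda>n. - (w ^ n / z ^ Suc n)) sums (1 / (w - z))"
proof -
  have z: "z \<noteq> 0" "w - z \<noteq> 0"
    using assms by auto
  have "(\<lambda>n. (w / z) ^ n) sums (1 / (1 - w / z))"
    using assms z by (intro geometric_sums) (simp add: norm_divide)
  from sums_mult[OF this, of "- 1 / z"]
  have "(\<lambda>n. - (w ^ n / z ^ Suc n)) sums (- 1 / z * (1 / (1 - w / z)))"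
    using z by (simp add: power_divide field_simps)
  also have "- 1 / z * (1 / (1 - w / z)) = 1 / (w - z)"
    using z by (simp add: field_simps)
  finally show ?thesis .
qed

lemma laurent_coeff_sums:
  assumes holo: "h holomorphic_on annulus \<beta>" and b: "0 \<le> \<beta>" "\<beta> < r" "r < 1"
    and z: "norm z < r"
  shows "(\<lambda>n. laurent_coeff h \<beta> n * z ^ n)
    sums (contour_integral (circlepath 0 r) (\<lambda>w. h w / (w - z)) / (2 * pi * \<i>))"
proof -
  have r: "r > 0"
    using b by simp
  obtain M where M: "M \<ge> 0" "\<And>w. norm w = r \<Longrightarrow> norm (h w) \<le> M"
    using bounded_on_sphere_annulus[OF holo b(2,3)] by blast
  note cont = continuous_on_sphere_annulus[OF holo b(2,3)]
  have "(\<lambda>n. contour_integral (circlepath 0 r) (\<lambda>w. z ^ n * (h w / w ^ Suc n)))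
      sums contour_integral (circlepath 0 r) (\<lambda>w. h w / (w - z))"
  proof (rule sums_contour_integral_circlepath[OF r, where M = "\<lambda>n. M / r * (norm z / r) ^ n"])
    show "continuous_on (sphere 0 r) (\<lambda>w. z ^ n * (h w / w ^ Suc n))" for n
      using r by (intro continuous_intros cont) auto
    show "norm (z ^ n * (h w / w ^ Suc n)) \<le> M / r * (norm z / r) ^ n" if "w \<in> sphere 0 r" for n w
    proof -
      have "norm (z ^ n * (h w / w ^ Suc n)) = norm z ^ n * norm (h w) / r ^ Suc n"
        using that by (simp add: norm_mult norm_divide norm_power)
      also have "\<dots> \<le> norm z ^ n * M / r ^ Suc n"
        using M(2)[of w] that r by (intro divide_right_mono mult_left_mono) auto
      finally show ?thesis
        by (simp add: power_divide field_simps)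
    qed
    show "summable (\<lambda>n. M / r * (norm z / r) ^ n)"
      using r z by (intro summable_mult summable_geometric) auto
    show "(\<lambda>n. z ^ n * (h w / w ^ Suc n)) sums (h w / (w - z))" if "w \<in> sphere 0 r" for w
      using sums_mult[OF Cauchy_kernel_sums_outer[of z w], of "h w"] that z
      by (simp add: field_simps)
  qed
  moreover have "contour_integral (circlepath 0 r) (\<lambda>w. z ^ n * (h w / w ^ Suc n))
      = 2 * pi * \<i> * (laurent_coeff h \<beta> n * z ^ n)" for n
  proof -
    have "(\<lambda>w. h w / w ^ Suc n) contour_integrable_on circlepath 0 r"
      using r by (intro contour_integrable_continuous_circlepath) (auto intro!: continuous_intros cont)
    then have "contour_integral (circlepath 0 r) (\<lambda>w. z ^ n * (h w / w ^ Suc n))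
        = z ^ n * contour_integral (circlepath 0 r) (\<lambda>w. h w / w ^ Suc n)"
      by (rule contour_integral_lmul)
    then show ?thesis
      by (simp add: laurent_coeff_circlepath[OF holo b])
  qed
  ultimately have "(\<lambda>n. 2 * pi * \<i> * (laurent_coeff h \<beta> n * z ^ n))
      sums contour_integral (circlepath 0 r) (\<lambda>w. h w / (w - z))"
    by simp
  from sums_divide[OF this, of "2 * pi * \<i>"] show ?thesis
    by simp
qed

lemma principal_coeff_sums:
  assumes holo: "h holomorphic_on annulus \<beta>" and b: "0 \<le> \<beta>" "\<beta> < r" "r < 1"
    and z: "r < norm z"
  shows "(\<lambda>n. principal_coeff h \<beta> n / z ^ Suc n)
    sums (- contour_integral (circlepath 0 r) (\<lambda>w. h w / (w - z)) / (2 * pi * \<i>))"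
proof -
  have r: "r > 0"
    using b by simp
  have z0: "z \<noteq> 0"
    using r z by auto
  obtain M where M: "M \<ge> 0" "\<And>w. norm w = r \<Longrightarrow> norm (h w) \<le> M"
    using bounded_on_sphere_annulus[OF holo b(2,3)] by blast
  note cont = continuous_on_sphere_annulus[OF holo b(2,3)]
  have "(\<lambda>n. contour_integral (circlepath 0 r) (\<lambda>w. - (h w * w ^ n) / z ^ Suc n))
      sums contour_integral (circlepath 0 r) (\<lambda>w. h w / (w - z))"
  proof (rule sums_contour_integral_circlepath[OF r, where M = "\<lambda>n. M / norm z * (r / norm z) ^ n"])
    show "continuous_on (sphere 0 r) (\<lambda>w. - (h w * w ^ n) / z ^ Suc n)" for n
      using z0 by (intro continuous_intros cont) auto
    show "norm (- (h w * w ^ n) / z ^ Suc n) \<le> M / norm z * (r / norm z) ^ n"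
      if "w \<in> sphere 0 r" for n w
    proof -
      have "norm (- (h w * w ^ n) / z ^ Suc n) = norm (h w) * r ^ n / norm z ^ Suc n"
        using that by (simp add: norm_mult norm_divide norm_power)
      also have "\<dots> \<le> M * r ^ n / norm z ^ Suc n"
        using M(2)[of w] that r by (intro divide_right_mono mult_right_mono) auto
      finally show ?thesis
        by (simp add: power_divide field_simps)
    qed
    show "summable (\<lambda>n. M / norm z * (r / norm z) ^ n)"
      using r z by (intro summable_mult summable_geometric) (simp add: divide_less_eq_1)
    show "(\<lambda>n. - (h w * w ^ n) / z ^ Suc n) sums (h w / (w - z))" if "w \<in> sphere 0 r" for w
      using sums_mult[OF Cauchy_kernel_sums_inner[of w z], of "h w"] that z
      by (simp add: field_simps)
  qed
  moreover have "contour_integral (circlepath 0 r) (\<lambda>w. - (h w * w ^ n) / z ^ Suc n)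
      = - (2 * pi * \<i>) * (principal_coeff h \<beta> n / z ^ Suc n)" for n
  proof -
    have "(\<lambda>w. h w * w ^ n) contour_integrable_on circlepath 0 r"
      using r by (intro contour_integrable_continuous_circlepath) (auto intro!: continuous_intros cont)
    then have "contour_integral (circlepath 0 r) (\<lambda>w. (- 1 / z ^ Suc n) * (h w * w ^ n))
        = (- 1 / z ^ Suc n) * contour_integral (circlepath 0 r) (\<lambda>w. h w * w ^ n)"
      by (rule contour_integral_lmul)
    then show ?thesis
      by (simp add: principal_coeff_circlepath[OF holo b] field_simps)
  qed
  ultimately have "(\<lambda>n. - (2 * pi * \<i>) * (principal_coeff h \<beta> n / z ^ Suc n))
      sums contour_integral (circlepath 0 r) (\<lambda>w. h w / (w - z))"
    by simp
  from sums_divide[OF this, of "- (2 * pi * \<i>)"] show ?thesis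
    by simp
qed

lemma Cauchy_integral_formula_annulus:
  assumes holo: "h holomorphic_on annulus \<beta>" and "0 \<le> \<beta>"
    and r: "\<beta> < r1" "r1 < norm z" "norm z < r2" "r2 < 1"
  shows "h z = (contour_integral (circlepath 0 r2) (\<lambda>w. h w / (w - z))
              - contour_integral (circlepath 0 r1) (\<lambda>w. h w / (w - z))) / (2 * pi * \<i>)"
proof -
  have z: "z \<in> annulus \<beta>"
    using assms by (simp add: annulus_def)
  define \<phi> where "\<phi> w = (if w = z then deriv h z else (h w - h z) / (w - z))" for w
  have "\<phi> holomorphic_on annulus \<beta>"
    unfolding \<phi>_def[abs_def] by (rule pole_lemma_open[OF holo open_annulus])
  then have same: "contour_integral (circlepath 0 r2) \<phi> = contour_integral (circlepath 0 r1) \<phi>"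
    using assms by (intro contour_integral_circlepath_annulus_eq) auto
  have split: "contour_integral (circlepath 0 r) \<phi>
      = contour_integral (circlepath 0 r) (\<lambda>w. h w / (w - z))
        - h z * contour_integral (circlepath 0 r) (\<lambda>w. 1 / (w - z))"
    if "\<beta> < r" "r < 1" "r \<noteq> norm z" for r
  proof -
    have r0: "r > 0"
      using that assms by simp
    have off: "w - z \<noteq> 0" if "w \<in> sphere 0 r" for w
      using that \<open>r \<noteq> norm z\<close> by auto
    note cont = continuous_on_sphere_annulus[OF holo that(1,2)]
    have int1: "(\<lambda>w. h w / (w - z)) contour_integrable_on circlepath 0 r"
      using r0 by (intro contour_integrable_continuous_circlepath)
        (auto intro!: continuous_intros cont dest: off)
    have int2: "(\<lambda>w. 1 / (w - z)) contour_integrable_on circlepath 0 r"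
      using r0 by (intro contour_integrable_continuous_circlepath)
        (auto intro!: continuous_intros dest: off)
    have "contour_integral (circlepath 0 r) \<phi>
        = contour_integral (circlepath 0 r) (\<lambda>w. h w / (w - z) - h z * (1 / (w - z)))"
      by (rule contour_integral_eq) (use off r0 in \<open>auto simp: \<phi>_def diff_divide_distrib\<close>)
    also have "\<dots> = contour_integral (circlepath 0 r) (\<lambda>w. h w / (w - z))
        - h z * contour_integral (circlepath 0 r) (\<lambda>w. 1 / (w - z))"
      by (simp only: contour_integral_diff[OF int1 contour_integrable_lmul[OF int2]]
          contour_integral_lmul[OF int2])
    finally show ?thesis .
  qed
  have "((\<lambda>w. 1 / (w - z)) has_contour_integral 2 * pi * \<i>) (circlepath 0 r2)"
    using Cauchy_integral_circlepath_simple[of "\<lambda>_. 1" 0 r2 z] r by auto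
  then have outer: "contour_integral (circlepath 0 r2) (\<lambda>w. 1 / (w - z)) = 2 * pi * \<i>"
    by (rule contour_integral_unique)
  have "((\<lambda>w. 1 / (w - z)) has_contour_integral 0) (circlepath 0 r1)"
  proof (rule Cauchy_theorem_disc_simple[of _ 0 "norm z"])
    show "(\<lambda>w. 1 / (w - z)) holomorphic_on ball 0 (norm z)"
      by (intro holomorphic_intros) auto
  qed (use r \<open>0 \<le> \<beta>\<close> in auto)
  then have inner: "contour_integral (circlepath 0 r1) (\<lambda>w. 1 / (w - z)) = 0"
    by (rule contour_integral_unique)
  show ?thesis
    using same split[of r1] split[of r2] outer inner r by (simp add: field_simps)
qed

theorem laurent_expansion_annulus:
  assumes holo: "h holomorphic_on annulus \<beta>" and "0 \<le> \<beta>" and z: "z \<in> annulus \<beta>"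
  shows "h z = (\<Sum>n. laurent_coeff h \<beta> n * z ^ n) + (\<Sum>n. principal_coeff h \<beta> n / z ^ Suc n)"
proof -
  define r1 where "r1 = (\<beta> + norm z) / 2"
  define r2 where "r2 = (norm z + 1) / 2"
  have r: "\<beta> < r1" "r1 < norm z" "norm z < r2" "r2 < 1"
    using z by (auto simp: annulus_def r1_def r2_def)
  show ?thesis
    using Cauchy_integral_formula_annulus[OF holo \<open>0 \<le> \<beta>\<close> r]
      sums_unique[OF laurent_coeff_sums[OF holo \<open>0 \<le> \<beta>\<close> _ r(4) r(3)]]
      sums_unique[OF principal_coeff_sums[OF holo \<open>0 \<le> \<beta>\<close> r(1) _ r(2)]] r
    by (simp add: diff_divide_distrib)
qed

lemma polar_power: "(of_real r * cis \<theta>) ^ n = of_real r ^ n * cis (real n * \<theta>)"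
  by (simp only: power_mult_distrib Complex.DeMoivre)

lemma integral_circle_laurent_coeff:
  assumes holo: "h holomorphic_on annulus \<beta>" and b: "0 \<le> \<beta>" "\<beta> < r" "r < 1"
  shows "integral {0..2*pi} (\<lambda>\<theta>. h (of_real r * cis \<theta>) * cis (- (real n * \<theta>)))
    = 2 * pi * r ^ n * laurent_coeff h \<beta> n"
proof -
  have r: "r > 0"
    using b by simp
  have integrand: "h (of_real r * cis \<theta>) / (of_real r * cis \<theta>) ^ Suc n * (\<i> * of_real r * cis \<theta>)
      = (\<i> / of_real r ^ n) * (h (of_real r * cis \<theta>) * cis (- (real n * \<theta>)))" for \<theta>
  proof -
    have "cis \<theta> / cis (real (Suc n) * \<theta>) = cis (- (real n * \<theta>))"
      by (simp add: cis_divide algebra_simps)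
    then show ?thesis
      unfolding polar_power using r by (simp add: field_simps)
  qed
  have "2 * pi * \<i> * laurent_coeff h \<beta> n = contour_integral (circlepath 0 r) (\<lambda>w. h w / w ^ Suc n)"
    by (simp add: laurent_coeff_circlepath[OF holo b])
  also have "\<dots> = (\<i> / of_real r ^ n)
      * integral {0..2*pi} (\<lambda>\<theta>. h (of_real r * cis \<theta>) * cis (- (real n * \<theta>)))"
    unfolding contour_integral_circlepath_0_eq_integral[OF r] integrand by simp
  finally show ?thesis
    using r by (simp add: field_simps)
qed

lemma integral_circle_principal_coeff:
  assumes holo: "h holomorphic_on annulus \<beta>" and b: "0 \<le> \<beta>" "\<beta> < r" "r < 1"
  shows "integral {0..2*pi} (\<lambda>\<theta>. h (of_real r * cis \<theta>) * cis (real (Suc n) * \<theta>))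
    = 2 * pi * principal_coeff h \<beta> n / r ^ Suc n"
proof -
  have r: "r > 0"
    using b by simp
  have integrand: "h (of_real r * cis \<theta>) * (of_real r * cis \<theta>) ^ n * (\<i> * of_real r * cis \<theta>)
      = (\<i> * of_real r ^ Suc n) * (h (of_real r * cis \<theta>) * cis (real (Suc n) * \<theta>))" for \<theta>
  proof -
    have "cis (real n * \<theta>) * cis \<theta> = cis (real (Suc n) * \<theta>)"
      by (simp add: cis_mult algebra_simps)
    then show ?thesis
      unfolding polar_power by (simp add: field_simps)
  qed
  have "2 * pi * \<i> * principal_coeff h \<beta> n = contour_integral (circlepath 0 r) (\<lambda>w. h w * w ^ n)"
    by (simp add: principal_coeff_circlepath[OF holo b])
  also have "\<dots> = (\<i> * of_real r ^ Suc n)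
      * integral {0..2*pi} (\<lambda>\<theta>. h (of_real r * cis \<theta>) * cis (real (Suc n) * \<theta>))"
    unfolding contour_integral_circlepath_0_eq_integral[OF r] integrand by simp
  finally show ?thesis
    using r by (simp add: field_simps)
qed

lemma has_integral_fourier_series_mult_cnj:
  fixes H :: "real \<Rightarrow> complex" and a :: "nat \<Rightarrow> complex" and k :: "nat \<Rightarrow> real"
  assumes H: "continuous_on {0..2*pi} H"
    and a: "summable (\<lambda>n. norm (a n))"
    and coeff: "\<And>n. integral {0..2*pi} (\<lambda>\<theta>. H \<theta> * cis (- (k n * \<theta>))) = 2 * pi * a n"
  shows "summable (\<lambda>n. norm (a n) ^ 2)"
    and "((\<lambda>\<theta>. (\<Sum>n. a n * cis (k n * \<theta>)) * cnj (H \<theta>))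
          has_integral of_real (2 * pi * (\<Sum>n. norm (a n) ^ 2))) {0..2*pi}"
proof -
  obtain B where B: "\<And>\<theta>. \<theta> \<in> {0..2*pi} \<Longrightarrow> norm (H \<theta>) \<le> B"
    using compact_imp_bounded[OF compact_continuous_image[OF H compact_Icc]]
    unfolding bounded_iff by blast
  define u where "u n \<theta> = a n * cis (k n * \<theta>) * cnj (H \<theta>)" for n \<theta>
  have cont: "continuous_on {0..2*pi} (u n)" for n
    unfolding u_def by (intro continuous_intros H)
  have bound: "norm (u n \<theta>) \<le> norm (a n) * B" if "\<theta> \<in> {0..2*pi}" for n \<theta>
    unfolding u_def using B[OF that] by (simp add: norm_mult mult_left_mono)
  have "summable (\<lambda>n. norm (a n) * B)"
    by (intro summable_mult2 a)
  note termwise = sums_integral_Weierstrass[OF cont bound this]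
  note I = termwise(1) and int = termwise(2)
  have "integral {0..2*pi} (u n) = of_real (2 * pi * norm (a n) ^ 2)" for n
  proof -
    have "u n = (\<lambda>\<theta>. a n * cnj (H \<theta> * cis (- (k n * \<theta>))))"
      by (auto simp: u_def cis_cnj)
    then have "integral {0..2*pi} (u n) = a n * cnj (integral {0..2*pi} (\<lambda>\<theta>. H \<theta> * cis (- (k n * \<theta>))))"
      by (simp only: integral_mult_right integral_cnj)
    also have "\<dots> = of_real (2 * pi) * (a n * cnj (a n))"
      by (simp add: coeff)
    finally show ?thesis
      by (simp flip: complex_norm_square)
  qed
  with I have sums: "(\<lambda>n. of_real (2 * pi * norm (a n) ^ 2)) sums integral {0..2*pi} (\<lambda>\<theta>. \<Sum>n. u n \<theta>)"
    by simp
  then have "summable (\<lambda>n. 2 * pi * norm (a n) ^ 2)"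
    using sums_Re by (fastforce simp: sums_iff)
  then show summ: "summable (\<lambda>n. norm (a n) ^ 2)"
    by (simp add: summable_cmult_iff)
  have "(\<lambda>n. of_real (2 * pi * norm (a n) ^ 2) :: complex) sums of_real (2 * pi * (\<Sum>n. norm (a n) ^ 2))"
    unfolding sums_of_real_iff by (intro sums_mult summable_sums summ)
  then have val: "integral {0..2*pi} (\<lambda>\<theta>. \<Sum>n. u n \<theta>) = of_real (2 * pi * (\<Sum>n. norm (a n) ^ 2))"
    using sums sums_unique2 by blast
  have "(\<Sum>n. a n * cis (k n * \<theta>)) * cnj (H \<theta>) = (\<Sum>n. u n \<theta>)" for \<theta>
  proof -
    have "summable (\<lambda>n. a n * cis (k n * \<theta>))"
      by (rule summable_norm_cancel) (simp add: norm_mult a)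
    then show ?thesis
      unfolding u_def by (rule suminf_mult2)
  qed
  then show "((\<lambda>\<theta>. (\<Sum>n. a n * cis (k n * \<theta>)) * cnj (H \<theta>))
      has_integral of_real (2 * pi * (\<Sum>n. norm (a n) ^ 2))) {0..2*pi}"
    using int val by (simp add: has_integral_integral)
qed

lemma has_integral_norm_square_fourier_pair:
  fixes H :: "real \<Rightarrow> complex" and a c :: "nat \<Rightarrow> complex" and k j :: "nat \<Rightarrow> real"
  assumes H: "continuous_on {0..2*pi} H"
    and a: "summable (\<lambda>n. norm (a n))"
      "\<And>n. integral {0..2*pi} (\<lambda>\<theta>. H \<theta> * cis (- (k n * \<theta>))) = 2 * pi * a n"
    and c: "summable (\<lambda>n. norm (c n))"
      "\<And>n. integral {0..2*pi} (\<lambda>\<theta>. H \<theta> * cis (- (j n * \<theta>))) = 2 * pi * c n"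
    and expansion: "\<And>\<theta>. H \<theta> = (\<Sum>n. a n * cis (k n * \<theta>)) + (\<Sum>n. c n * cis (j n * \<theta>))"
  shows "summable (\<lambda>n. norm (a n) ^ 2)" and "summable (\<lambda>n. norm (c n) ^ 2)"
    and "((\<lambda>\<theta>. norm (H \<theta>) ^ 2) has_integral
          2 * pi * ((\<Sum>n. norm (a n) ^ 2) + (\<Sum>n. norm (c n) ^ 2))) {0..2*pi}"
proof -
  note A = has_integral_fourier_series_mult_cnj[OF H a]
  note C = has_integral_fourier_series_mult_cnj[OF H c]
  show "summable (\<lambda>n. norm (a n) ^ 2)" "summable (\<lambda>n. norm (c n) ^ 2)"
    by (fact A(1) C(1))+
  have "H \<theta> * cnj (H \<theta>) = (\<Sum>n. a n * cis (k n * \<theta>)) * cnj (H \<theta>)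
      + (\<Sum>n. c n * cis (j n * \<theta>)) * cnj (H \<theta>)" for \<theta>
    by (simp only: distrib_right[symmetric] expansion[symmetric])
  then have "((\<lambda>\<theta>. H \<theta> * cnj (H \<theta>)) has_integral
      of_real (2 * pi * (\<Sum>n. norm (a n) ^ 2)) + of_real (2 * pi * (\<Sum>n. norm (c n) ^ 2))) {0..2*pi}"
    using has_integral_add[OF A(2) C(2)] by (simp only:)
  from has_integral_Re[OF this]
  show "((\<lambda>\<theta>. norm (H \<theta>) ^ 2) has_integral
      2 * pi * ((\<Sum>n. norm (a n) ^ 2) + (\<Sum>n. norm (c n) ^ 2))) {0..2*pi}"
    by (simp add: algebra_simps flip: complex_norm_square)
qed

lemma laurent_expansion_circle:
  assumes holo: "h holomorphic_on annulus \<beta>" and b: "0 \<le> \<beta>" "\<beta> < r" "r < 1"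
  shows "h (of_real r * cis \<theta>)
    = (\<Sum>n. (laurent_coeff h \<beta> n * of_real r ^ n) * cis (real n * \<theta>))
      + (\<Sum>n. (principal_coeff h \<beta> n / of_real r ^ Suc n) * cis (- real (Suc n) * \<theta>))"
proof -
  have "principal_coeff h \<beta> n / (of_real r * cis \<theta>) ^ Suc n
      = (principal_coeff h \<beta> n / of_real r ^ Suc n) * cis (- real (Suc n) * \<theta>)" for n
  proof -
    have "cis (- real (Suc n) * \<theta>) = inverse (cis (real (Suc n) * \<theta>))"
      by (simp add: cis_inverse algebra_simps)
    then show ?thesis
      unfolding polar_power by (simp only: divide_inverse inverse_mult_distrib mult_ac)
  qed
  then show ?thesis
    unfolding laurent_expansion_annulus[OF holo b(1) polar_in_annulus[OF b]]
    by (simp add: polar_power mult.assoc)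
qed

theorem parseval_annulus:
  assumes holo: "h holomorphic_on annulus \<beta>" and b: "0 \<le> \<beta>" "\<beta> < r" "r < 1"
  shows "summable (\<lambda>n. norm (laurent_coeff h \<beta> n) ^ 2 * r ^ (2 * n))"
    and "summable (\<lambda>n. norm (principal_coeff h \<beta> n) ^ 2 / r ^ (2 * Suc n))"
    and "integral {0..2*pi} (\<lambda>\<theta>. norm (h (of_real r * cis \<theta>)) ^ 2)
      = 2 * pi * ((\<Sum>n. norm (laurent_coeff h \<beta> n) ^ 2 * r ^ (2 * n))
                  + (\<Sum>n. norm (principal_coeff h \<beta> n) ^ 2 / r ^ (2 * Suc n)))"
proof -
  have r: "r > 0"
    using b by simp
  define a where "a n = laurent_coeff h \<beta> n * of_real r ^ n" for n
  define c where "c n = principal_coeff h \<beta> n / of_real r ^ Suc n" for n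
  have cont: "continuous_on {0..2*pi} (\<lambda>\<theta>. h (of_real r * cis \<theta>))"
    by (rule continuous_on_compose2[OF continuous_on_sphere_annulus[OF holo b(2,3)]])
       (use r in \<open>auto intro!: continuous_intros simp: norm_mult\<close>)
  have sa: "summable (\<lambda>n. norm (a n))"
    using summable_laurent_coeff[OF holo b] r by (simp add: a_def norm_mult norm_power)
  have fa: "integral {0..2*pi} (\<lambda>\<theta>. h (of_real r * cis \<theta>) * cis (- (real n * \<theta>))) = 2 * pi * a n"
    for n
    unfolding a_def integral_circle_laurent_coeff[OF holo b] by (simp add: mult_ac)
  have sc: "summable (\<lambda>n. norm (c n))"
    using summable_principal_coeff[OF holo b] r by (simp add: c_def norm_divide norm_mult norm_power)
  have fc: "integral {0..2*pi} (\<lambda>\<theta>. h (of_real r * cis \<theta>) * cis (- (- real (Suc n) * \<theta>)))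
      = 2 * pi * c n" for n
    unfolding c_def minus_mult_left minus_minus integral_circle_principal_coeff[OF holo b] by simp
  note P = has_integral_norm_square_fourier_pair[OF cont sa fa sc fc
      laurent_expansion_circle[OF holo b, folded a_def c_def]]
  have na: "norm (a n) ^ 2 = norm (laurent_coeff h \<beta> n) ^ 2 * r ^ (2 * n)" for n
    using r by (simp add: a_def norm_mult norm_power power_mult_distrib power_even_eq)
  have nc: "norm (c n) ^ 2 = norm (principal_coeff h \<beta> n) ^ 2 / r ^ (2 * Suc n)" for n
    using r unfolding power_even_eq by (simp add: c_def norm_divide norm_mult norm_power power_divide)
  show "summable (\<lambda>n. norm (laurent_coeff h \<beta> n) ^ 2 * r ^ (2 * n))"
    "summable (\<lambda>n. norm (principal_coeff h \<beta> n) ^ 2 / r ^ (2 * Suc n))"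
    using P(1,2) unfolding na nc .
  show "integral {0..2*pi} (\<lambda>\<theta>. norm (h (of_real r * cis \<theta>)) ^ 2)
      = 2 * pi * ((\<Sum>n. norm (laurent_coeff h \<beta> n) ^ 2 * r ^ (2 * n))
                  + (\<Sum>n. norm (principal_coeff h \<beta> n) ^ 2 / r ^ (2 * Suc n)))"
    using P(3) unfolding na nc by (rule integral_unique)
qed

section \<open>A holomorphic square root of \<open>1 / f'\<close>\<close>

lemma norm_difference_quotient_minus_le:
  fixes f :: "complex \<Rightarrow> complex"
  assumes holo: "f holomorphic_on ball x d"
    and bound: "\<And>w. w \<in> ball x d \<Longrightarrow> norm (deriv f w - c) \<le> B"
    and ab: "a \<in> ball x d" "b \<in> ball x d" "a \<noteq> b"
  shows "norm ((f b - f a) / (b - a) - c) \<le> B"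
proof -
  have "((\<lambda>w. f w - c * w) has_field_derivative deriv f w - c) (at w within ball x d)"
    if "w \<in> ball x d" for w
  proof -
    have "((\<lambda>w. f w - c * w) has_field_derivative deriv f w - c) (at w)"
      using holomorphic_derivI[OF holo open_ball that] by (auto intro!: derivative_eq_intros)
    then show ?thesis
      by (rule has_field_derivative_at_within)
  qed
  from field_differentiable_bound[OF convex_ball this bound ab(2,1)]
  have "norm ((f b - c * b) - (f a - c * a)) \<le> B * norm (b - a)" .
  moreover have "(f b - f a) / (b - a) - c = ((f b - c * b) - (f a - c * a)) / (b - a)"
    using ab(3) by (simp add: field_simps)
  ultimately show ?thesis
    using ab(3) by (simp add: norm_divide divide_le_eq)
qed

definition diff_quotient :: "(complex \<Rightarrow> complex) \<Rightarrow> complex \<times> complex \<Rightarrow> complex" where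
  "diff_quotient f = (\<lambda>(x, y). if y = x then deriv f x else (f y - f x) / (y - x))"

lemma continuous_diff_quotient_off_diagonal:
  fixes f :: "complex \<Rightarrow> complex"
  assumes holo: "f holomorphic_on U" and U: "open U" and xy: "x \<in> U" "y \<in> U" "x \<noteq> y"
  shows "continuous (at (x, y) within U \<times> U) (diff_quotient f)"
proof -
  define V where "V = (U \<times> U) \<inter> {p. fst p \<noteq> snd p}"
  have "open V"
    unfolding V_def
    by (intro open_Int open_Times U open_Collect_neq continuous_on_fst continuous_on_snd
        continuous_on_id)
  have f: "continuous_on U f"
    by (rule holomorphic_on_imp_continuous_on[OF holo])
  have "continuous_on V (\<lambda>p. (f (snd p) - f (fst p)) / (snd p - fst p))"
  proof (intro continuous_on_divide continuous_on_diff)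
    show "continuous_on V (\<lambda>p. f (snd p))" "continuous_on V (\<lambda>p. f (fst p))"
      by (auto intro!: continuous_on_compose2[OF f] continuous_on_fst continuous_on_snd
          continuous_on_id simp: V_def)
  qed (auto intro!: continuous_on_fst continuous_on_snd continuous_on_id simp: V_def)
  then have "continuous_on V (diff_quotient f)"
    by (rule continuous_on_eq) (auto simp: V_def diff_quotient_def)
  moreover have "(x, y) \<in> V"
    using xy by (simp add: V_def)
  ultimately have "isCont (diff_quotient f) (x, y)"
    using continuous_on_eq_continuous_at[OF \<open>open V\<close>] by blast
  then show ?thesis
    by (rule continuous_at_imp_continuous_at_within)
qed

lemma continuous_diff_quotient_diagonal:
  fixes f :: "complex \<Rightarrow> complex"
  assumes holo: "f holomorphic_on U" and U: "open U" and x: "x \<in> U"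
  shows "continuous (at (x, x) within U \<times> U) (diff_quotient f)"
  unfolding continuous_within_eps_delta
proof (intro allI impI)
  fix e :: real assume "e > 0"
  have "continuous_on U (deriv f)"
    by (rule holomorphic_on_imp_continuous_on[OF holomorphic_deriv[OF holo U]])
  then have "isCont (deriv f) x"
    using U x continuous_on_eq_continuous_at by blast
  moreover have "e / 2 > 0"
    using \<open>e > 0\<close> by simp
  ultimately obtain d1 where "d1 > 0" and d1: "\<And>w. dist w x < d1 \<Longrightarrow> dist (deriv f w) (deriv f x) < e / 2"
    unfolding continuous_at_eps_delta by blast
  obtain d2 where "d2 > 0" and d2: "ball x d2 \<subseteq> U"
    using U x open_contains_ball by blast
  define d where "d = min d1 d2"
  have near: "norm (diff_quotient f (a, b) - deriv f x) \<le> e / 2" if "a \<in> ball x d" "b \<in> ball x d" for a b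
  proof (cases "a = b")
    case True
    then show ?thesis
      using d1[of a] that by (auto simp: diff_quotient_def d_def dist_norm norm_minus_commute)
  next
    case False
    have "norm ((f b - f a) / (b - a) - deriv f x) \<le> e / 2"
    proof (rule norm_difference_quotient_minus_le[OF _ _ that False])
      show "f holomorphic_on ball x d"
        by (rule holomorphic_on_subset[OF holo]) (use d2 in \<open>auto simp: d_def\<close>)
      show "norm (deriv f w - deriv f x) \<le> e / 2" if "w \<in> ball x d" for w
        using d1[of w] that by (auto simp: d_def dist_commute dist_norm)
    qed
    then show ?thesis
      using False by (auto simp: diff_quotient_def)
  qed
  show "\<exists>d>0. \<forall>p\<in>U \<times> U. dist p (x, x) < d \<longrightarrow> dist (diff_quotient f p) (diff_quotient f (x, x)) < e"
  proof (intro exI[of _ d] conjI ballI impI)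
    show "d > 0"
      using \<open>d1 > 0\<close> \<open>d2 > 0\<close> by (simp add: d_def)
    fix p assume "p \<in> U \<times> U" "dist p (x, x) < d"
    then have "fst p \<in> ball x d" "snd p \<in> ball x d"
      using dist_fst_le[of p "(x, x)"] dist_snd_le[of p "(x, x)"] by (auto simp: dist_commute)
    then show "dist (diff_quotient f p) (diff_quotient f (x, x)) < e"
      using near[of "fst p" "snd p"] \<open>e > 0\<close> by (simp add: dist_norm diff_quotient_def)
  qed
qed

lemma continuous_on_diff_quotient:
  fixes f :: "complex \<Rightarrow> complex"
  assumes "f holomorphic_on U" "open U"
  shows "continuous_on (U \<times> U) (diff_quotient f)"
  unfolding continuous_on_eq_continuous_within
proof (intro ballI)
  fix p assume "p \<in> U \<times> U"
  then obtain x y where "p = (x, y)" "x \<in> U" "y \<in> U"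
    by blast
  then show "continuous (at p within U \<times> U) (diff_quotient f)"
    using continuous_diff_quotient_off_diagonal[OF assms, of x y]
      continuous_diff_quotient_diagonal[OF assms, of x] by (cases "x = y") auto
qed

lemma winding_number_antipodal_odd:
  assumes \<gamma>: "path \<gamma>" "0 \<notin> path_image \<gamma>"
    and antipodal: "\<And>\<tau>. \<tau> \<in> {0..1/2} \<Longrightarrow> \<gamma> (\<tau> + 1/2) = - \<gamma> \<tau>"
  obtains m :: int where "winding_number \<gamma> 0 = of_int (2 * m + 1)"
proof -
  obtain q where q: "path q" "pathfinish q - pathstart q = 2 * of_real pi * \<i> * winding_number \<gamma> 0"
    "\<And>t. t \<in> {0..1} \<Longrightarrow> \<gamma> t = 0 + exp (q t)"
    using winding_number_as_continuous_log[OF \<gamma>] by blast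
  have q_cont: "continuous_on {0..1} q"
    using q(1) by (simp add: path_def)
  obtain m :: int where m: "\<And>\<tau>. \<tau> \<in> {0..1/2} \<Longrightarrow> q (\<tau> + 1/2) = (q \<tau> + pi * \<i>) + 2 * pi * \<i> * of_int m"
  proof (rule continuous_logs_differ_by_constant[of "{0..1/2}" "\<lambda>\<tau>. q (\<tau> + 1/2)" "\<lambda>\<tau>. q \<tau> + pi * \<i>" 0])
    show "continuous_on {0..1/2} (\<lambda>\<tau>. q (\<tau> + 1/2))"
      by (rule continuous_on_compose2[OF q_cont]) (auto intro!: continuous_intros)
    show "continuous_on {0..1/2} (\<lambda>\<tau>. q \<tau> + pi * \<i>)"
      by (intro continuous_intros continuous_on_subset[OF q_cont]) auto
    show "exp (q (\<tau> + 1/2)) = exp (q \<tau> + pi * \<i>)" if "\<tau> \<in> {0..1/2}" for \<tau>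
      using q(3)[of "\<tau> + 1/2"] q(3)[of \<tau>] antipodal[OF that] that by (simp add: exp_add)
  qed (auto intro: that)
  have "pathfinish q - pathstart q = (q (1/2 + 1/2) - q (1/2)) + (q (0 + 1/2) - q 0)"
    by (simp add: pathfinish_def pathstart_def)
  also have "\<dots> = 2 * pi * \<i> * of_int (2 * m + 1)"
    using m[of "1/2"] m[of 0] by (simp add: algebra_simps)
  finally show ?thesis
    using q(2) that by simp
qed

lemma winding_number_eq_log_increment:
  assumes L: "continuous_on {0..1} L" and \<gamma>: "\<And>\<tau>. \<tau> \<in> {0..1} \<Longrightarrow> \<gamma> \<tau> = exp (L \<tau>)"
  shows "winding_number \<gamma> 0 = (L 1 - L 0) / (2 * pi * \<i>)"
proof -
  have "path \<gamma>"
    unfolding path_def using continuous_on_exp[OF L] by (rule continuous_on_eq) (simp add: \<gamma>)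
  moreover have "0 \<notin> path_image \<gamma>"
    using \<gamma> by (auto simp: path_image_def)
  ultimately obtain q where q: "path q" "pathfinish q - pathstart q = 2 * of_real pi * \<i> * winding_number \<gamma> 0"
    "\<And>t. t \<in> {0..1} \<Longrightarrow> \<gamma> t = 0 + exp (q t)"
    using winding_number_as_continuous_log by blast
  obtain n :: int where n: "\<And>\<tau>. \<tau> \<in> {0..1} \<Longrightarrow> L \<tau> = q \<tau> + 2 * pi * \<i> * of_int n"
  proof (rule continuous_logs_differ_by_constant[of "{0..1}" L q 0])
    show "continuous_on {0..1} q"
      using q(1) by (simp add: path_def)
  qed (use L \<gamma> q(3) that in auto)
  show ?thesis
    using n[of 0] n[of 1] q(2) by (simp add: pathfinish_def pathstart_def field_simps)
qed

lemma circlepath_in_annulus: "0 \<le> \<beta> \<Longrightarrow> \<beta> < r \<Longrightarrow> r < 1 \<Longrightarrow> circlepath 0 r \<tau> \<in> annulus \<beta>"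
  by (simp add: annulus_def norm_mult norm_exp_eq_Re circlepath)

lemma continuous_on_circlepath: "continuous_on T (circlepath z r)"
  by (simp add: circlepath continuous_intros)

text \<open>Moving \<open>w\<close> from \<open>z\<close> to \<open>-z\<close> along the circle, \<open>z\<close> times the difference quotient of \<open>f\<close>
  at \<open>(z, w)\<close> deforms \<open>z f'(z)\<close> into \<open>(f(z) - f(-z)) / 2\<close>; it never vanishes since \<open>f\<close> is
  injective and \<open>f'\<close> has no zeros.\<close>

lemma homotopic_loops_circlepath_deriv_antipodal:
  fixes f :: "complex \<Rightarrow> complex"
  assumes holo: "f holomorphic_on annulus \<beta>" and inj: "inj_on f (annulus \<beta>)"
    and r: "0 \<le> \<beta>" "\<beta> < r" "r < 1"
  shows "homotopic_loops (- {0}) (\<lambda>\<tau>. circlepath 0 r \<tau> * deriv f (circlepath 0 r \<tau>))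
    (\<lambda>\<tau>. (f (circlepath 0 r \<tau>) - f (- circlepath 0 r \<tau>)) / 2)"
proof -
  let ?z = "circlepath 0 r"
  define H where "H = (\<lambda>(s, \<tau>). diff_quotient f (?z \<tau>, exp (\<i> * of_real (pi * s)) * ?z \<tau>) * ?z \<tau>)"
  note z_in = circlepath_in_annulus[OF r]
  have z_nz: "?z \<tau> \<noteq> 0" for \<tau>
    using r by (simp add: circlepath)
  have rot_in: "exp (\<i> * of_real (pi * s)) * ?z \<tau> \<in> annulus \<beta>" for s \<tau>
    using z_in[of \<tau>] by (simp add: annulus_def norm_mult norm_exp_eq_Re)
  have K_nz: "diff_quotient f (x, y) \<noteq> 0" if "x \<in> annulus \<beta>" "y \<in> annulus \<beta>" for x y
    using holomorphic_injective_imp_regular[OF holo open_annulus inj] inj_onD[OF inj] that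
    by (auto simp: diff_quotient_def)
  have "continuous_on ({0..1} \<times> {0..1})
      (\<lambda>p. diff_quotient f (?z (snd p), exp (\<i> * of_real (pi * fst p)) * ?z (snd p)))"
  proof (rule continuous_on_compose2[OF continuous_on_diff_quotient[OF holo open_annulus]])
    show "continuous_on ({0..1} \<times> {0..1}) (\<lambda>p. (?z (snd p), exp (\<i> * of_real (pi * fst p)) * ?z (snd p)))"
      by (intro continuous_intros continuous_on_compose2[OF continuous_on_circlepath[of UNIV]]) auto
    show "(\<lambda>p. (?z (snd p), exp (\<i> * of_real (pi * fst p)) * ?z (snd p))) ` ({0..1} \<times> {0..1})
        \<subseteq> annulus \<beta> \<times> annulus \<beta>"
      using z_in rot_in by blast
  qed
  then have "continuous_on ({0..1} \<times> {0..1}) H"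
    unfolding H_def case_prod_beta
    by (intro continuous_on_mult continuous_on_compose2[OF continuous_on_circlepath[of UNIV]]
        continuous_on_snd continuous_on_id) auto
  moreover have "H \<in> {0..1} \<times> {0..1} \<rightarrow> - {0}"
    using K_nz[OF z_in rot_in] z_nz by (auto simp: H_def)
  moreover have "H (0, \<tau>) = ?z \<tau> * deriv f (?z \<tau>)" for \<tau>
    by (simp add: H_def diff_quotient_def)
  moreover have "H (1, \<tau>) = (f (?z \<tau>) - f (- ?z \<tau>)) / 2" for \<tau>
    using z_nz[of \<tau>] by (simp add: H_def diff_quotient_def field_simps)
  moreover have "pathfinish (H \<circ> Pair s) = pathstart (H \<circ> Pair s)" for s
    by (simp add: H_def pathfinish_def pathstart_def circlepath)
  ultimately show ?thesis
    unfolding homotopic_loops by (intro exI[of _ H]) auto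
qed

lemma winding_number_circlepath_deriv_odd:
  fixes f :: "complex \<Rightarrow> complex"
  assumes holo: "f holomorphic_on annulus \<beta>" and inj: "inj_on f (annulus \<beta>)"
    and r: "0 \<le> \<beta>" "\<beta> < r" "r < 1"
  obtains m :: int
  where "winding_number (\<lambda>\<tau>. circlepath 0 r \<tau> * deriv f (circlepath 0 r \<tau>)) 0 = of_int (2 * m + 1)"
proof -
  let ?z = "circlepath 0 r"
  define \<gamma> where "\<gamma> \<tau> = (f (?z \<tau>) - f (- ?z \<tau>)) / 2" for \<tau>
  note z_in = circlepath_in_annulus[OF r]
  have f_cont: "continuous_on (annulus \<beta>) f"
    by (rule holomorphic_on_imp_continuous_on[OF holo])
  have "continuous_on {0..1} (\<lambda>\<tau>. f (?z \<tau>))"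
    by (rule continuous_on_compose2[OF f_cont continuous_on_circlepath]) (use z_in in blast)
  moreover have "continuous_on {0..1} (\<lambda>\<tau>. f (- ?z \<tau>))"
    by (rule continuous_on_compose2[OF f_cont continuous_on_minus[OF continuous_on_circlepath]])
       (use z_in uminus_in_annulus in blast)
  ultimately have "path \<gamma>"
    unfolding path_def \<gamma>_def by (intro continuous_on_divide continuous_on_diff continuous_on_const) auto
  moreover have "0 \<notin> path_image \<gamma>"
    using inj_onD[OF inj _ z_in uminus_in_annulus[OF z_in]] r
    by (fastforce simp: path_image_def \<gamma>_def circlepath)
  moreover have "\<gamma> (\<tau> + 1/2) = - \<gamma> \<tau>" for \<tau>
  proof -
    have "?z (\<tau> + 1/2) = - ?z \<tau>"
      by (simp add: circlepath distrib_left exp_add)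
    then show ?thesis
      unfolding \<gamma>_def minus_minus by (simp add: field_simps)
  qed
  ultimately obtain m :: int where "winding_number \<gamma> 0 = of_int (2 * m + 1)"
    using winding_number_antipodal_odd by blast
  moreover have "winding_number (\<lambda>\<tau>. ?z \<tau> * deriv f (?z \<tau>)) 0 = winding_number \<gamma> 0"
    unfolding \<gamma>_def
    by (rule winding_number_homotopic_loops[OF homotopic_loops_circlepath_deriv_antipodal[OF assms]])
  ultimately show ?thesis
    using that by simp
qed

lemma Ln_uminus_shift_cases:
  assumes "z \<noteq> 0"
  shows "Ln (- z) + pi * \<i> = Ln z \<or> Ln (- z) + pi * \<i> = Ln z + 2 * pi * \<i>"
proof -
  have "exp (Ln z) = exp (Ln (- z) + pi * \<i>)"
    using assms by (simp add: exp_add)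
  then obtain j :: int where j: "Ln z = Ln (- z) + pi * \<i> + (of_int (2 * j) * pi) * \<i>"
    using exp_eq by blast
  have "Im (Ln z) = Im (Ln (- z)) + pi + 2 * j * pi"
    using arg_cong[OF j, of Im] by simp
  moreover have "- pi < Im (Ln z)" "Im (Ln z) \<le> pi" "- pi < Im (Ln (- z))" "Im (Ln (- z)) \<le> pi"
    using mpi_less_Im_Ln Im_Ln_le_pi assms by auto
  ultimately have "- 3 * pi < (2 * real_of_int j) * pi" "(2 * real_of_int j) * pi < 1 * pi"
    by linarith+
  then have "- 3 < 2 * real_of_int j" "2 * real_of_int j < 1"
    using pi_gt_zero mult_less_cancel_right_pos by blast+
  then have "j = 0 \<or> j = -1"
    by linarith
  then show ?thesis
    using j by (auto simp: algebra_simps)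
qed

lemma holomorphic_on_periodic_comp_Ln:
  fixes Q :: "complex \<Rightarrow> complex"
  assumes U: "open U" "0 \<notin> U"
    and holo: "Q holomorphic_on exp -` U"
    and periodic: "\<And>w. exp w \<in> U \<Longrightarrow> Q (w + 2 * pi * \<i>) = Q w"
  shows "(\<lambda>z. Q (Ln z)) holomorphic_on U"
  unfolding holomorphic_on_def
proof
  fix z assume z: "z \<in> U"
  have z0: "z \<noteq> 0"
    using z U(2) by auto
  have "open (exp -` U)"
    using U(1) by (rule continuous_open_vimage) (intro continuous_intros)
  then have Q_diff: "Q field_differentiable at w" if "exp w \<in> U" for w
    using holomorphic_on_imp_differentiable_at[OF holo] that by simp
  have alt: "Q (Ln (- \<xi>) + pi * \<i>) = Q (Ln \<xi>)" if "\<xi> \<in> U" for \<xi>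
  proof -
    have "\<xi> \<noteq> 0"
      using that U(2) by auto
    then have "exp (Ln \<xi>) \<in> U"
      using that by simp
    from Ln_uminus_shift_cases[OF \<open>\<xi> \<noteq> 0\<close>] show ?thesis
    proof
      assume "Ln (- \<xi>) + pi * \<i> = Ln \<xi> + 2 * pi * \<i>"
      then show ?thesis
        by (simp only: periodic[OF \<open>exp (Ln \<xi>) \<in> U\<close>])
    qed simp
  qed
  show "(\<lambda>z. Q (Ln z)) field_differentiable at z within U"
  proof (cases "z \<in> \<real>\<^sub>\<le>\<^sub>0")
    case False
    have "(Q \<circ> Ln) field_differentiable at z"
      using z z0 by (intro field_differentiable_compose[OF field_differentiable_at_Ln[OF False]] Q_diff)
        simp
    then show ?thesis
      unfolding o_def by (rule field_differentiable_at_within)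
  next
    case True
    then have nz: "- z \<notin> \<real>\<^sub>\<le>\<^sub>0"
      using z0 by (auto simp: nonpos_Reals_def)
    have "Ln field_differentiable at (- z)"
      by (rule field_differentiable_at_Ln[OF nz])
    then have "(Ln \<circ> uminus) field_differentiable at z"
      by (intro field_differentiable_compose) (auto intro!: derivative_intros)
    then have "(\<lambda>\<xi>. Ln (- \<xi>) + pi * \<i>) field_differentiable at z"
      unfolding o_def by (intro derivative_intros)
    then have "(Q \<circ> (\<lambda>\<xi>. Ln (- \<xi>) + pi * \<i>)) field_differentiable at z"
    proof (intro field_differentiable_compose Q_diff)
      show "exp (Ln (- z) + pi * \<i>) \<in> U"
        using z z0 by (simp add: exp_add)
    qed
    then have "(\<lambda>\<xi>. Q (Ln (- \<xi>) + pi * \<i>)) field_differentiable at z within U"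
      unfolding o_def by (rule field_differentiable_at_within)
    then show ?thesis
      by (rule field_differentiable_transform_within[OF zero_less_one z, rotated]) (simp add: alt)
  qed
qed

lemma holomorphic_log_periodic:
  fixes \<Phi> :: "complex \<Rightarrow> complex"
  assumes S: "convex S" "x0 \<in> S" and holo: "\<Phi> holomorphic_on S" and nz: "\<And>w. w \<in> S \<Longrightarrow> \<Phi> w \<noteq> 0"
    and shift: "\<And>w. w \<in> S \<Longrightarrow> w + p \<in> S" and periodic: "\<And>w. w \<in> S \<Longrightarrow> \<Phi> (w + p) = \<Phi> w"
  obtains M and k :: int where "M holomorphic_on S" "\<And>w. w \<in> S \<Longrightarrow> \<Phi> w = exp (M w)"
    "\<And>w. w \<in> S \<Longrightarrow> M (w + p) = M w + 2 * pi * \<i> * of_int k"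
proof -
  obtain M where M: "M holomorphic_on S" and \<Phi>_M: "\<And>w. w \<in> S \<Longrightarrow> \<Phi> w = exp (M w)"
    using contractible_imp_holomorphic_log[OF holo convex_imp_contractible[OF S(1)] nz] by blast
  have M_cont: "continuous_on S M"
    by (rule holomorphic_on_imp_continuous_on[OF M])
  obtain k :: int where "\<And>w. w \<in> S \<Longrightarrow> M (w + p) = M w + 2 * pi * \<i> * of_int k"
  proof (rule continuous_logs_differ_by_constant[OF convex_connected[OF S(1)] _ M_cont _ S(2)])
    show "continuous_on S (\<lambda>w. M (w + p))"
      by (rule continuous_on_compose2[OF M_cont]) (use shift in \<open>auto intro!: continuous_intros\<close>)
    show "exp (M (w + p)) = exp (M w)" if "w \<in> S" for w
      using \<Phi>_M[OF shift[OF that]] \<Phi>_M[OF that] periodic[OF that] by simp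
  qed (auto intro: that)
  then show ?thesis
    using that M \<Phi>_M by blast
qed

text \<open>Pulled back by \<open>exp\<close>, a logarithm of \<open>z f'(z)\<close> gains \<open>2 \<pi> i\<close> times the winding number
  of \<open>z f'(z)\<close> along a circle over one period, and this number is odd.\<close>

lemma holomorphic_log_deriv_pullback:
  fixes f :: "complex \<Rightarrow> complex"
  assumes \<beta>: "0 < \<beta>" "\<beta> < 1" and holo: "f holomorphic_on annulus \<beta>" and inj: "inj_on f (annulus \<beta>)"
  obtains M and m :: int where "M holomorphic_on exp -` annulus \<beta>"
    "\<And>w. exp w \<in> annulus \<beta> \<Longrightarrow> exp w * deriv f (exp w) = exp (M w)"
    "\<And>w. exp w \<in> annulus \<beta> \<Longrightarrow> M (w + 2 * pi * \<i>) = M w + 2 * pi * \<i> * of_int (2 * m + 1)"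
proof -
  define S where "S = exp -` annulus \<beta>"
  have S_eq: "S = {w. ln \<beta> < Re w} \<inter> {w. Re w < 0}"
    using exp_in_annulus_iff[OF \<beta>(1)] by (auto simp: S_def)
  have "convex S"
    unfolding S_eq by (intro convex_Int convex_halfspace_Re_gt convex_halfspace_Re_lt)
  define r where "r = (\<beta> + 1) / 2"
  have r: "\<beta> < r" "r < 1" "r > 0"
    using \<beta> by (auto simp: r_def)
  define w where "w \<tau> = of_real (ln r) + 2 * pi * \<i> * of_real \<tau>" for \<tau> :: real
  have w_in: "w \<tau> \<in> S" for \<tau>
    using r \<beta> by (simp add: S_eq w_def)
  have "(\<lambda>w. exp w * deriv f (exp w)) holomorphic_on S"
  proof -
    have "(deriv f \<circ> exp) holomorphic_on S"
      by (rule holomorphic_on_compose_gen[OF _ holomorphic_deriv[OF holo open_annulus]])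
         (auto intro: holomorphic_intros simp: S_def)
    then show ?thesis
      unfolding o_def by (intro holomorphic_intros)
  qed
  moreover have "exp w * deriv f (exp w) \<noteq> 0" if "w \<in> S" for w
    using holomorphic_injective_imp_regular[OF holo open_annulus inj] that by (simp add: S_def)
  ultimately obtain M and k :: int where M: "M holomorphic_on S"
    and \<Phi>_M: "\<And>w. w \<in> S \<Longrightarrow> exp w * deriv f (exp w) = exp (M w)"
    and k: "\<And>w. w \<in> S \<Longrightarrow> M (w + 2 * pi * \<i>) = M w + 2 * pi * \<i> * of_int k"
    by (rule holomorphic_log_periodic[OF \<open>convex S\<close> w_in]) (auto simp: S_def exp_add)
  have "circlepath 0 r \<tau> * deriv f (circlepath 0 r \<tau>) = exp (M (w \<tau>))" for \<tau>
  proof -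
    have "circlepath 0 r \<tau> = exp (w \<tau>)"
      using r by (simp add: circlepath w_def exp_add exp_of_real)
    then show ?thesis
      using \<Phi>_M[OF w_in] by simp
  qed
  moreover have "continuous_on {0..1} (\<lambda>\<tau>. M (w \<tau>))"
    by (rule continuous_on_compose2[OF holomorphic_on_imp_continuous_on[OF M]])
       (use w_in in \<open>auto intro!: continuous_intros simp: w_def\<close>)
  ultimately have "winding_number (\<lambda>\<tau>. circlepath 0 r \<tau> * deriv f (circlepath 0 r \<tau>)) 0 = of_int k"
    using winding_number_eq_log_increment[of "\<lambda>\<tau>. M (w \<tau>)"] k[OF w_in[of 0]]
    by (simp add: w_def)
  moreover obtain m :: int
    where "winding_number (\<lambda>\<tau>. circlepath 0 r \<tau> * deriv f (circlepath 0 r \<tau>)) 0 = of_int (2 * m + 1)"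
    using winding_number_circlepath_deriv_odd[OF holo inj _ r(1,2)] \<beta> by auto
  ultimately have "(of_int k :: complex) = of_int (2 * m + 1)"
    by simp
  then have "k = 2 * m + 1"
    by (simp only: of_int_eq_iff)
  then show ?thesis
    using that[of M m] M \<Phi>_M k by (simp add: S_def)
qed

lemma holomorphic_sqrt_inverse_deriv:
  fixes f :: "complex \<Rightarrow> complex"
  assumes \<beta>: "0 < \<beta>" "\<beta> < 1" and holo: "f holomorphic_on annulus \<beta>" and inj: "inj_on f (annulus \<beta>)"
  obtains h where "h holomorphic_on annulus \<beta>" "\<And>z. z \<in> annulus \<beta> \<Longrightarrow> h z ^ 2 * deriv f z = 1"
proof -
  obtain M and m :: int where M: "M holomorphic_on exp -` annulus \<beta>"
    and \<Phi>_M: "\<And>w. exp w \<in> annulus \<beta> \<Longrightarrow> exp w * deriv f (exp w) = exp (M w)"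
    and period: "\<And>w. exp w \<in> annulus \<beta> \<Longrightarrow> M (w + 2 * pi * \<i>) = M w + 2 * pi * \<i> * of_int (2 * m + 1)"
    using holomorphic_log_deriv_pullback[OF assms] by blast
  define Q where "Q v = exp ((v - M v) / 2)" for v
  have "Q holomorphic_on exp -` annulus \<beta>"
    unfolding Q_def by (intro holomorphic_intros M) simp
  moreover have "Q (v + 2 * pi * \<i>) = Q v" if "exp v \<in> annulus \<beta>" for v
  proof -
    have e: "(v + 2 * pi * \<i> - M (v + 2 * pi * \<i>)) / 2 = (v - M v) / 2 + (2 * of_int (- m) * pi) * \<i>"
      using period[OF that] by (simp add: field_simps)
    have "exp ((2 * of_int (- m) * pi) * \<i>) = 1"
      using exp_integer_2pi[of "of_int (- m)"] by simp
    then show ?thesis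
      unfolding Q_def e exp_add by simp
  qed
  ultimately have "(\<lambda>z. Q (Ln z)) holomorphic_on annulus \<beta>"
    using \<beta> by (intro holomorphic_on_periodic_comp_Ln open_annulus zero_notin_annulus) auto
  moreover have "Q (Ln z) ^ 2 * deriv f z = 1" if "z \<in> annulus \<beta>" for z
  proof -
    have z0: "z \<noteq> 0"
      using that zero_notin_annulus[of \<beta>] \<beta> by auto
    then have "z * deriv f z = exp (M (Ln z))"
      using \<Phi>_M[of "Ln z"] that by simp
    moreover have "Q (Ln z) ^ 2 * exp (M (Ln z)) = z"
      unfolding Q_def using z0 by (simp add: power2_eq_square exp_diff flip: exp_add)
    ultimately have "z * (Q (Ln z) ^ 2 * deriv f z) = z"
      by (metis mult.left_commute)
    then show ?thesis
      using z0 by simp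
  qed
  ultimately show ?thesis
    using that by blast
qed

section \<open>The sign of \<open>B\<close>\<close>

lemma A_fun_eq_exp_series:
  assumes \<beta>: "0 < \<beta>" and holo: "h holomorphic_on annulus \<beta>"
    and sqrt: "\<And>z. z \<in> annulus \<beta> \<Longrightarrow> h z ^ 2 * deriv f z = 1"
    and t: "t \<in> {ln \<beta><..<0}"
  shows "summable (\<lambda>n. \<bar>norm (laurent_coeff h \<beta> n) ^ 2\<bar> * exp (2 * real n * t))"
    and "summable (\<lambda>n. \<bar>norm (principal_coeff h \<beta> n) ^ 2\<bar> * exp (- 2 * real (Suc n) * t))"
    and "A_fun f t = exp_series (\<lambda>n. norm (laurent_coeff h \<beta> n) ^ 2) (\<lambda>n. 2 * real n) t
                   + exp_series (\<lambda>n. norm (principal_coeff h \<beta> n) ^ 2) (\<lambda>n. - 2 * real (Suc n)) t"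
proof -
  define r where "r = exp t"
  have r: "\<beta> < r" "r < 1" "r > 0"
    using t \<beta> exp_less_cancel_iff[of "ln \<beta>" t] by (auto simp: r_def)
  note parseval = parseval_annulus[OF holo less_imp_le[OF \<beta>] r(1,2)]
  have pos: "norm (laurent_coeff h \<beta> n) ^ 2 * r ^ (2 * n)
      = \<bar>norm (laurent_coeff h \<beta> n) ^ 2\<bar> * exp (2 * real n * t)" for n
  proof -
    have "r ^ (2 * n) = exp (real (2 * n) * t)"
      unfolding r_def by (rule exp_of_nat_mult[symmetric])
    then show ?thesis
      by simp
  qed
  have neg: "norm (principal_coeff h \<beta> n) ^ 2 / r ^ (2 * Suc n)
      = \<bar>norm (principal_coeff h \<beta> n) ^ 2\<bar> * exp (- 2 * real (Suc n) * t)" for n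
  proof -
    have "exp (- 2 * real (Suc n) * t) = inverse (exp (real (2 * Suc n) * t))"
      by (subst exp_minus[symmetric]) (simp add: algebra_simps)
    moreover have "r ^ (2 * Suc n) = exp (real (2 * Suc n) * t)"
      unfolding r_def by (rule exp_of_nat_mult[symmetric])
    ultimately show ?thesis
      by (simp only: divide_inverse abs_power2 abs_norm_cancel)
  qed
  show "summable (\<lambda>n. \<bar>norm (laurent_coeff h \<beta> n) ^ 2\<bar> * exp (2 * real n * t))"
    using parseval(1) unfolding pos .
  show "summable (\<lambda>n. \<bar>norm (principal_coeff h \<beta> n) ^ 2\<bar> * exp (- 2 * real (Suc n) * t))"
    using parseval(2) unfolding neg .
  have "1 / norm (deriv f (of_real r * cis \<theta>)) = norm (h (of_real r * cis \<theta>)) ^ 2" for \<theta>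
  proof -
    have "norm (deriv f (of_real r * cis \<theta>)) * norm (h (of_real r * cis \<theta>)) ^ 2 = 1"
      using arg_cong[OF sqrt[OF polar_in_annulus[OF less_imp_le[OF \<beta>] r(1,2)]], of norm]
      by (simp add: norm_mult norm_power mult.commute)
    then show ?thesis
      using inverse_unique by (fastforce simp: inverse_eq_divide)
  qed
  then have "A_fun f t = integral {0..2*pi} (\<lambda>\<theta>. norm (h (of_real r * cis \<theta>)) ^ 2) / (2 * pi)"
    using r by (simp add: A_fun_def r_def[symmetric])
  also have "\<dots> = exp_series (\<lambda>n. norm (laurent_coeff h \<beta> n) ^ 2) (\<lambda>n. 2 * real n) t
      + exp_series (\<lambda>n. norm (principal_coeff h \<beta> n) ^ 2) (\<lambda>n. - 2 * real (Suc n)) t"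
    unfolding parseval(3) exp_series_def pos neg by simp
  finally show "A_fun f t = exp_series (\<lambda>n. norm (laurent_coeff h \<beta> n) ^ 2) (\<lambda>n. 2 * real n) t
      + exp_series (\<lambda>n. norm (principal_coeff h \<beta> n) ^ 2) (\<lambda>n. - 2 * real (Suc n)) t" .
qed

lemma B_fun_eq_exp_series:
  assumes \<beta>: "0 < \<beta>" and holo: "h holomorphic_on annulus \<beta>"
    and sqrt: "\<And>z. z \<in> annulus \<beta> \<Longrightarrow> h z ^ 2 * deriv f z = 1"
    and t: "t \<in> {ln \<beta><..<0}"
  defines "c \<equiv> \<lambda>n. norm (laurent_coeff h \<beta> n) ^ 2 * (2 * real n * (2 * real n) - 2 * (2 * real n))"
    and "d \<equiv> \<lambda>n. norm (principal_coeff h \<beta> n) ^ 2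
                 * (- 2 * real (Suc n) * (- 2 * real (Suc n)) - 2 * (- 2 * real (Suc n)))"
  shows "B_fun f t = exp_series c (\<lambda>n. 2 * real n) t + exp_series d (\<lambda>n. - 2 * real (Suc n)) t"
    and "summable (\<lambda>n. c n * exp (2 * real n * t))"
    and "summable (\<lambda>n. d n * exp (- 2 * real (Suc n) * t))"
proof -
  note A = A_fun_eq_exp_series[OF \<beta> holo sqrt]
  show "B_fun f t = exp_series c (\<lambda>n. 2 * real n) t + exp_series d (\<lambda>n. - 2 * real (Suc n)) t"
    unfolding B_fun_def c_def d_def by (rule exp_series_pair_deriv2_minus_2deriv[OF A t])
  show "summable (\<lambda>n. c n * exp (2 * real n * t))"
    unfolding c_def by (rule exp_series_summable_ode_weights[OF A(1) t])
  show "summable (\<lambda>n. d n * exp (- 2 * real (Suc n) * t))"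
    unfolding d_def by (rule exp_series_summable_ode_weights[OF A(2) t])
qed

lemma laurent_expansion_affine:
  assumes holo: "h holomorphic_on annulus \<beta>" and "0 \<le> \<beta>"
    and pos: "\<And>n. n \<ge> 2 \<Longrightarrow> laurent_coeff h \<beta> n = 0"
    and neg: "\<And>n. principal_coeff h \<beta> n = 0"
    and z: "z \<in> annulus \<beta>"
  shows "h z = laurent_coeff h \<beta> 0 + laurent_coeff h \<beta> 1 * z"
proof -
  have "(\<Sum>n. laurent_coeff h \<beta> n * z ^ n) = (\<Sum>n\<in>{0, 1}. laurent_coeff h \<beta> n * z ^ n)"
    by (rule suminf_finite) (auto simp: pos)
  then show ?thesis
    using laurent_expansion_annulus[OF holo \<open>0 \<le> \<beta>\<close> z] by (simp add: neg)
qed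

lemma DERIV_same_imp_diff_constant:
  fixes f g :: "complex \<Rightarrow> complex"
  assumes S: "open S" "connected S"
    and f: "\<And>z. z \<in> S \<Longrightarrow> (f has_field_derivative D z) (at z)"
    and g: "\<And>z. z \<in> S \<Longrightarrow> (g has_field_derivative D z) (at z)"
  obtains C where "\<And>z. z \<in> S \<Longrightarrow> f z - g z = C"
proof -
  have "continuous_on S (\<lambda>z. f z - g z)"
    by (rule continuous_at_imp_continuous_on) (use f g DERIV_isCont in \<open>blast intro: isCont_diff\<close>)
  moreover have "\<forall>z\<in>S - {}. ((\<lambda>z. f z - g z) has_field_derivative 0) (at z)"
    using DERIV_diff[OF f g] by simp
  ultimately obtain C where "\<And>z. z \<in> S \<Longrightarrow> f z - g z = C"
    by (rule DERIV_zero_connected_constant[OF S(2,1) finite.emptyI]) blast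
  then show ?thesis
    by (rule that)
qed

lemma deriv_inverse_square_affine_cases:
  fixes f :: "complex \<Rightarrow> complex"
  assumes S: "open S" "connected S" and holo: "f holomorphic_on S"
    and deriv: "\<And>z. z \<in> S \<Longrightarrow> (c0 + c1 * z) ^ 2 * deriv f z = 1"
  shows "(\<exists>C1 C2. \<forall>z\<in>S. f z = C1 + C2 * z)
    \<or> (\<exists>C1 C2 C3. \<forall>z\<in>S. z + C3 \<noteq> 0 \<and> f z = C1 + C2 / (z + C3))"
proof -
  have f': "(f has_field_derivative deriv f z) (at z)" if "z \<in> S" for z
    by (rule holomorphic_derivI[OF holo S(1) that])
  have deriv_eq: "deriv f z = inverse ((c0 + c1 * z) ^ 2)" if "z \<in> S" for z
    using inverse_unique[OF deriv[OF that]] by simp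
  have nz: "c0 + c1 * z \<noteq> 0" if "z \<in> S" for z
    using deriv[OF that] by auto
  show ?thesis
  proof (cases "c1 = 0")
    case True
    have "((\<lambda>z. z / c0 ^ 2) has_field_derivative deriv f z) (at z)" if "z \<in> S" for z
    proof (rule DERIV_cong)
      show "((\<lambda>z. z / c0 ^ 2) has_field_derivative 1 / c0 ^ 2) (at z)"
        by (intro DERIV_cdivide DERIV_ident)
    qed (simp add: deriv_eq[OF that] True divide_inverse)
    then obtain C where "\<And>z. z \<in> S \<Longrightarrow> f z - z / c0 ^ 2 = C"
      using DERIV_same_imp_diff_constant[OF S f'] by blast
    then have "\<forall>z\<in>S. f z = C + 1 / c0 ^ 2 * z"
      by (simp add: diff_eq_eq)
    then show ?thesis
      by blast
  next
    case False
    define C3 where "C3 = c0 / c1"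
    have affine: "c0 + c1 * z = c1 * (z + C3)" for z
      using False by (simp add: C3_def field_simps)
    have nz3: "z + C3 \<noteq> 0" if "z \<in> S" for z
      using nz[OF that] affine[of z] by auto
    have "((\<lambda>z. - inverse (c1 ^ 2 * (z + C3))) has_field_derivative deriv f z) (at z)"
      if "z \<in> S" for z
    proof (rule DERIV_cong)
      show "((\<lambda>z. - inverse (c1 ^ 2 * (z + C3))) has_field_derivative
          - (- (c1 ^ 2 * (1 + 0) * inverse ((c1 ^ 2 * (z + C3)) ^ Suc (Suc 0))))) (at z)"
        using nz3[OF that] False
        by (intro DERIV_minus DERIV_inverse_fun DERIV_cmult DERIV_add DERIV_ident DERIV_const) simp
      have "(c1 ^ 2 * (z + C3)) ^ Suc (Suc 0) = c1 ^ 2 * (c1 * (z + C3)) ^ 2"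
        by (simp add: power2_eq_square)
      moreover have "c1 * (z + C3) \<noteq> 0"
        using False nz3[OF that] by simp
      ultimately show "- (- (c1 ^ 2 * (1 + 0) * inverse ((c1 ^ 2 * (z + C3)) ^ Suc (Suc 0))))
          = deriv f z"
        using False unfolding deriv_eq[OF that] affine by (simp add: field_simps)
    qed
    then obtain C where "\<And>z. z \<in> S \<Longrightarrow> f z - - inverse (c1 ^ 2 * (z + C3)) = C"
      using DERIV_same_imp_diff_constant[OF S f'] by blast
    moreover have "- inverse (c1 ^ 2 * (z + C3)) = (- inverse (c1 ^ 2)) / (z + C3)" for z
      by (simp add: divide_inverse inverse_mult_distrib)
    ultimately have "\<forall>z\<in>S. z + C3 \<noteq> 0 \<and> f z = C + (- inverse (c1 ^ 2)) / (z + C3)"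
      using nz3 by (metis diff_eq_eq diff_minus_eq_add)
    then show ?thesis
      by blast
  qed
qed

lemma B_fun_nonneg_and_rigidity:
  assumes \<beta>: "0 < \<beta>" "\<beta> < 1" and holo: "h holomorphic_on annulus \<beta>"
    and sqrt: "\<And>z. z \<in> annulus \<beta> \<Longrightarrow> h z ^ 2 * deriv f z = 1"
  shows "\<forall>t\<in>{ln \<beta><..<0}. B_fun f t \<ge> 0"
    and "(\<exists>t0\<in>{ln \<beta><..<0}. B_fun f t0 = 0) \<or> (B_fun f \<longlongrightarrow> 0) (at_left 0) \<Longrightarrow>
      (\<forall>t\<in>{ln \<beta><..<0}. B_fun f t = 0) \<and> (\<forall>n\<ge>2. laurent_coeff h \<beta> n = 0)
      \<and> (\<forall>n. principal_coeff h \<beta> n = 0)"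
proof -
  define c where "c n = norm (laurent_coeff h \<beta> n) ^ 2 * (2 * real n * (2 * real n) - 2 * (2 * real n))" for n
  define d where "d n = norm (principal_coeff h \<beta> n) ^ 2
    * (- 2 * real (Suc n) * (- 2 * real (Suc n)) - 2 * (- 2 * real (Suc n)))" for n
  have series: "B_fun f t = exp_series c (\<lambda>n. 2 * real n) t + exp_series d (\<lambda>n. - 2 * real (Suc n)) t"
      "summable (\<lambda>n. c n * exp (2 * real n * t))"
      "summable (\<lambda>n. d n * exp (- 2 * real (Suc n) * t))"
    if "t \<in> {ln \<beta><..<0}" for t
    using B_fun_eq_exp_series[OF \<beta>(1) holo sqrt that] unfolding c_def[abs_def] d_def[abs_def]
    by simp_all
  have c: "c n \<ge> 0" for n
  proof -
    have "2 * real n \<le> 0 \<or> 2 \<le> 2 * real n"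
      by (cases n) auto
    then show ?thesis
      unfolding c_def by (intro mult_nonneg_nonneg ode_factor_nonneg) auto
  qed
  have d: "d n > 0 \<or> principal_coeff h \<beta> n = 0" for n
  proof (cases "principal_coeff h \<beta> n = 0")
    case False
    have "0 < - 2 * real (Suc n) * (- 2 * real (Suc n)) - 2 * (- 2 * real (Suc n))"
      by (rule ode_factor_pos) simp
    moreover have "0 < norm (principal_coeff h \<beta> n) ^ 2"
      using False by simp
    ultimately show ?thesis
      unfolding d_def by simp
  qed simp
  then have d_nonneg: "d n \<ge> 0" for n
    by (metis d_def less_imp_le mult_eq_0_iff norm_zero order_refl power_zero_numeral)
  show "\<forall>t\<in>{ln \<beta><..<0}. B_fun f t \<ge> 0"
    using series c d_nonneg by (simp add: exp_series_nonneg)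
  show "(\<forall>t\<in>{ln \<beta><..<0}. B_fun f t = 0) \<and> (\<forall>n\<ge>2. laurent_coeff h \<beta> n = 0)
      \<and> (\<forall>n. principal_coeff h \<beta> n = 0)"
    if "(\<exists>t0\<in>{ln \<beta><..<0}. B_fun f t0 = 0) \<or> (B_fun f \<longlongrightarrow> 0) (at_left 0)"
  proof -
    have zero: "c n = 0 \<and> d n = 0" for n
      using \<beta> that by (intro exp_series_pair_weights_vanish[OF _ series(2,3) c d_nonneg series(1)]) simp_all
    then have "c = (\<lambda>_. 0)" "d = (\<lambda>_. 0)"
      by auto
    then have "\<forall>t\<in>{ln \<beta><..<0}. B_fun f t = 0"
      using series(1) by (simp add: exp_series_def)
    moreover have "laurent_coeff h \<beta> n = 0" if "n \<ge> 2" for n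
      using zero[of n] ode_factor_pos[of "2 * real n"] that by (simp add: c_def)
    moreover have "principal_coeff h \<beta> n = 0" for n
      using zero[of n] d[of n] by simp
    ultimately show ?thesis
      by blast
  qed
qed

theorem proposition4p2:
  fixes f :: "complex \<Rightarrow> complex" and \<beta> :: real
  assumes "0 < \<beta>" "\<beta> < 1"
    and "f holomorphic_on annulus \<beta>"
    and "inj_on f (annulus \<beta>)"
    and "bounded (f ` annulus \<beta>)"
  shows "(\<forall>t\<in>{ln \<beta><..<0}. B_fun f t \<ge> 0)
    \<and> (((\<exists>t0\<in>{ln \<beta><..<0}. B_fun f t0 = 0) \<or> (B_fun f \<longlongrightarrow> 0) (at_left 0)) \<longrightarrow>
        (\<forall>t\<in>{ln \<beta><..<0}. B_fun f t = 0) \<and>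
        ((\<exists>C1 C2. \<forall>z\<in>annulus \<beta>. f z = C1 + C2 * z) \<or>
         (\<exists>C1 C2 C3. \<forall>z\<in>annulus \<beta>. z + C3 \<noteq> 0 \<and> f z = C1 + C2 / (z + C3))))"
proof -
  obtain h where h_holo: "h holomorphic_on annulus \<beta>"
    and h_sqrt: "\<And>z. z \<in> annulus \<beta> \<Longrightarrow> h z ^ 2 * deriv f z = 1"
    using holomorphic_sqrt_inverse_deriv[OF assms(1-4)] by blast
  note B = B_fun_nonneg_and_rigidity[OF assms(1,2) h_holo]
  show ?thesis
  proof (intro conjI impI)
    show "\<forall>t\<in>{ln \<beta><..<0}. B_fun f t \<ge> 0"
      using B(1) h_sqrt by blast
    assume "(\<exists>t0\<in>{ln \<beta><..<0}. B_fun f t0 = 0) \<or> (B_fun f \<longlongrightarrow> 0) (at_left 0)"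
    then have rigid: "(\<forall>t\<in>{ln \<beta><..<0}. B_fun f t = 0) \<and> (\<forall>n\<ge>2. laurent_coeff h \<beta> n = 0)
        \<and> (\<forall>n. principal_coeff h \<beta> n = 0)"
      using B(2) h_sqrt by blast
    then show "\<forall>t\<in>{ln \<beta><..<0}. B_fun f t = 0"
      by blast
    have "(laurent_coeff h \<beta> 0 + laurent_coeff h \<beta> 1 * z) ^ 2 * deriv f z = 1"
      if "z \<in> annulus \<beta>" for z
      using h_sqrt[OF that] laurent_expansion_affine[OF h_holo _ _ _ that] rigid assms(1) by simp
    then show "(\<exists>C1 C2. \<forall>z\<in>annulus \<beta>. f z = C1 + C2 * z) \<or>
        (\<exists>C1 C2 C3. \<forall>z\<in>annulus \<beta>. z + C3 \<noteq> 0 \<and> f z = C1 + C2 / (z + C3))"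
      by (rule deriv_inverse_square_affine_cases[OF open_annulus connected_annulus_unit assms(3)])
  qed
qed

end
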